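(* The preparametrised space $\mathbb R_i=(\mathbb R,\xi_{\mathbb R_i},\mu_{\mathbb R_i})$ of interval reals is a parametrised space, i.e. the parameter $\mu_{\mathbb R_i}$ is well defined on $\mathrm{dom}(\xi_{\mathbb R_i})$ and the identity map $\mathbb R_i\to\mathbb R_i$ is computable in polynomial time.
   Context: Fix a finite non-empty alphabet $\Sigma$ and Baire space $\mathcal B=\Sigma^{*\Sigma^*}$. Oracle machines $M^?$ query an oracle $\varphi\in\mathcal B$ (a query costs one step); $M^\varphi(\mathbf a)$ is the output, $\mathrm{Time}_{M^?}(\varphi,\mathbf a)$ the step count. Second-order polynomials: smallest class of functions $\mathbb N^{\mathbb N}\times\mathbb N\to\mathbb N$ containing $(l,n)\mapsto p(n)$ for $p\in\mathbb N[X]$, closed under $P\mapsto((l,n)\mapsto l(P(l,n)))$, pointwise sum and product. For a set $X$ with partial surjection $\xi\colon\subseteq\mathcal B\to X$ and $\mu\colon\mathrm{dom}(\xi)\to\mathbb N^{\mathbb N}$ with non-decreasing values, $(X,\xi,\mu)$ is a preparametrised space; a map $f\colon X\to Y$ between such spaces is computable in polynomial time if some oracle machine $M^?$ and second-order polynomials $P,Q$ satisfy for all $\varphi\in\mathrm{dom}(\xi_X)$: $M^\varphi$ is total with $\xi_Y(M^\varphi)=f(\xi_X(\varphi))$, $\mathrm{Time}_{M^?}(\varphi,\mathbf a)\le P(\mu_X(\varphi),|\mathbf a|)$ and $\mu_Y(M^\varphi)(n)\le Q(\mu_X(\varphi),n)$. A parametrised space is a preparametrised space whose identity is computable in polynomial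 time. Encodings: integers in binary with a sign bit; dyadic rationals $\mathbb D=\{r/2^n: r\in\mathbb Z,n\in\mathbb N\}$ by their finite binary expansion; a natural number $n$ given as input is supplied as the code of the integer $2^n$; pairs of strings via a fixed pairing function. $\mathrm I\mathbb D$ is the set of finite dyadic intervals $[r\pm\varepsilon]=[r-\varepsilon,r+\varepsilon]$ ($r,\varepsilon\in\mathbb D$, encoded as the pair of codes of $r$ and $\varepsilon$) together with $[-\infty,\infty]$; $\mathrm{diam}([r\pm\varepsilon])=2\varepsilon$. A function $\varphi\colon\mathbb N\to\mathrm I\mathbb D$ stands for any string function mapping the code of $2^n$ to a code of $\varphi(n)$. Interval reals: $\varphi\colon\mathbb N\to\mathrm I\mathbb D$ is a $\xi_{\mathbb R_i}$-name of $x\in\mathbb R$ iff $(\varphi(n))_n$ is nested with $\bigcap_n\varphi(n)=\{x\}$, and $\mu_{\mathbb R_i}(\varphi)(n)=\min\{N\mid\mathrm{diam}(\varphi(N))\le2^{-n}\}+\lceil\mathrm{lb}(|x|+1)\rceil$, where $\mathrm{lb}$ is the binary logarithm. *)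

theory Defs
  imports Complex_Main "HOL-Computational_Algebra.Polynomial"
begin

text \<open>Multi-tape oracle Turing machine over the alphabet bool (blank = None).
  Tapes: 0 input, 1 query, 2 oracle answer, 3 output, plus otm_extra work tapes.
  States are natural numbers below otm_nstates; state 0 is the start state,
  1 the halting state, 2 the query state, 3 the state entered after a query.
  A query (being in state 2) costs one step: the string on the query tape is
  replaced on the answer tape by the oracle answer, head at cell 0.\<close>

datatype dir = DL | DN | DR

type_synonym tape = "(nat \<Rightarrow> bool option) \<times> nat"

datatype otm = OTM
  (otm_nstates: nat)
  (otm_extra: nat)
  (otm_delta: "nat \<Rightarrow> bool option list \<Rightarrow> nat \<times> bool option list \<times> dir list")

definition otm_wf :: "otm \<Rightarrow> bool" where
  "otm_wf M \<longleftrightarrow> 4 \<le> otm_nstates M \<and>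
     (\<forall>q s. q < otm_nstates M \<longrightarrow> fst (otm_delta M q s) < otm_nstates M)"

definition string_tape :: "bool list \<Rightarrow> tape" where
  "string_tape w = ((\<lambda>i. if i < length w then Some (w ! i) else None), 0)"

definition blank_tape :: tape where
  "blank_tape = ((\<lambda>_. None), 0)"

definition tape_contents :: "tape \<Rightarrow> bool list" where
  "tape_contents t = map (\<lambda>i. the (fst t i)) [0..<(LEAST i. fst t i = None)]"

definition tape_read :: "tape \<Rightarrow> bool option" where
  "tape_read t = fst t (snd t)"

definition tape_write_move :: "tape \<Rightarrow> bool option \<Rightarrow> dir \<Rightarrow> tape" where
  "tape_write_move t s d = ((fst t)(snd t := s),
     (case d of DL \<Rightarrow> snd t - 1 | DN \<Rightarrow> snd t | DR \<Rightarrow> snd t + 1))"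

definition otm_step :: "(bool list \<Rightarrow> bool list) \<Rightarrow> otm \<Rightarrow> nat \<times> tape list \<Rightarrow> nat \<times> tape list" where
  "otm_step \<phi> M c = (let q = fst c; ts = snd c in
     if q = 1 then c
     else if q = 2 then (3, ts[2 := string_tape (\<phi> (tape_contents (ts ! 1)))])
     else (case otm_delta M q (map tape_read ts) of (q', ws, ds) \<Rightarrow>
       (q', map (\<lambda>i. if i < length ws \<and> i < length ds
                     then tape_write_move (ts ! i) (ws ! i) (ds ! i) else ts ! i)
              [0..<length ts])))"

definition otm_init :: "otm \<Rightarrow> bool list \<Rightarrow> nat \<times> tape list" where
  "otm_init M a = (0, string_tape a # replicate (3 + otm_extra M) blank_tape)"

definition otm_run :: "(bool list \<Rightarrow> bool list) \<Rightarrow> otm \<Rightarrow> bool list \<Rightarrow> nat \<Rightarrow> nat \<times> tape list" where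
  "otm_run \<phi> M a t = (otm_step \<phi> M ^^ t) (otm_init M a)"

definition otm_halts_within :: "(bool list \<Rightarrow> bool list) \<Rightarrow> otm \<Rightarrow> bool list \<Rightarrow> nat \<Rightarrow> bool" where
  "otm_halts_within \<phi> M a t \<longleftrightarrow> fst (otm_run \<phi> M a t) = 1"

definition otm_total :: "(bool list \<Rightarrow> bool list) \<Rightarrow> otm \<Rightarrow> bool" where
  "otm_total \<phi> M \<longleftrightarrow> (\<forall>a. \<exists>t. otm_halts_within \<phi> M a t)"

definition otm_time :: "(bool list \<Rightarrow> bool list) \<Rightarrow> otm \<Rightarrow> bool list \<Rightarrow> nat" where
  "otm_time \<phi> M a = (LEAST t. otm_halts_within \<phi> M a t)"

definition otm_out :: "(bool list \<Rightarrow> bool list) \<Rightarrow> otm \<Rightarrow> bool list \<Rightarrow> bool list" where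
  "otm_out \<phi> M a = tape_contents (snd (otm_run \<phi> M a (otm_time \<phi> M a)) ! 3)"

inductive_set sopoly :: "((nat \<Rightarrow> nat) \<Rightarrow> nat \<Rightarrow> nat) set" where
  sop_poly: "(\<lambda>l n. poly p n) \<in> sopoly"
| sop_app: "P \<in> sopoly \<Longrightarrow> (\<lambda>l n. l (P l n)) \<in> sopoly"
| sop_add: "P \<in> sopoly \<Longrightarrow> Q \<in> sopoly \<Longrightarrow> (\<lambda>l n. P l n + Q l n) \<in> sopoly"
| sop_mult: "P \<in> sopoly \<Longrightarrow> Q \<in> sopoly \<Longrightarrow> (\<lambda>l n. P l n * Q l n) \<in> sopoly"

text \<open>A preparametrised space on the type 'x is given by a domain D of the partial
  representation xi (xi is only relevant on D) and a parameter mu.\<close>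
definition preparametrised_space ::
  "(bool list \<Rightarrow> bool list) set \<Rightarrow> ((bool list \<Rightarrow> bool list) \<Rightarrow> 'x)
     \<Rightarrow> ((bool list \<Rightarrow> bool list) \<Rightarrow> nat \<Rightarrow> nat) \<Rightarrow> bool" where
  "preparametrised_space D xi mu \<longleftrightarrow> xi ` D = UNIV \<and> (\<forall>\<phi>\<in>D. mono (mu \<phi>))"

definition poly_time_computable ::
  "(bool list \<Rightarrow> bool list) set \<Rightarrow> ((bool list \<Rightarrow> bool list) \<Rightarrow> 'x)
     \<Rightarrow> ((bool list \<Rightarrow> bool list) \<Rightarrow> nat \<Rightarrow> nat)
   \<Rightarrow> (bool list \<Rightarrow> bool list) set \<Rightarrow> ((bool list \<Rightarrow> bool list) \<Rightarrow> 'y)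
     \<Rightarrow> ((bool list \<Rightarrow> bool list) \<Rightarrow> nat \<Rightarrow> nat)
   \<Rightarrow> ('x \<Rightarrow> 'y) \<Rightarrow> bool" where
  "poly_time_computable DX xiX muX DY xiY muY f \<longleftrightarrow>
     (\<exists>M P Q. otm_wf M \<and> P \<in> sopoly \<and> Q \<in> sopoly \<and>
       (\<forall>\<phi>\<in>DX. otm_total \<phi> M \<and> otm_out \<phi> M \<in> DY \<and>
          xiY (otm_out \<phi> M) = f (xiX \<phi>) \<and>
          (\<forall>a. otm_time \<phi> M a \<le> P (muX \<phi>) (length a)) \<and>
          (\<forall>n. muY (otm_out \<phi> M) n \<le> Q (muX \<phi>) n)))"

definition parametrised_space ::
  "(bool list \<Rightarrow> bool list) set \<Rightarrow> ((bool list \<Rightarrow> bool list) \<Rightarrow> 'x)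
     \<Rightarrow> ((bool list \<Rightarrow> bool list) \<Rightarrow> nat \<Rightarrow> nat) \<Rightarrow> bool" where
  "parametrised_space D xi mu \<longleftrightarrow>
     preparametrised_space D xi mu \<and> poly_time_computable D xi mu D xi mu id"

text \<open>Binary representation of a natural number, most significant bit first,
  no leading zeros (bin 0 = []).\<close>
fun bin :: "nat \<Rightarrow> bool list" where
  "bin n = (if n = 0 then [] else bin (n div 2) @ [odd n])"

text \<open>Integers: sign bit (True = negative) followed by the binary digits of |z|.\<close>
definition int_code :: "int \<Rightarrow> bool list" where
  "int_code z = (z < 0) # bin (nat \<bar>z\<bar>)"

text \<open>A natural number n given as input is the code of the integer 2^n.\<close>
definition nat_code :: "nat \<Rightarrow> bool list" where
  "nat_code n = int_code (2 ^ n)"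

text \<open>Fixed pairing function (bitwise interleaving with presence flags).\<close>
definition pair_code :: "bool list \<Rightarrow> bool list \<Rightarrow> bool list" where
  "pair_code u v = concat (map (\<lambda>i. [i < length u, i < length u \<and> u ! i,
                                     i < length v, i < length v \<and> v ! i])
                        [0..<max (length u) (length v)])"

definition dyadic :: "real \<Rightarrow> bool" where
  "dyadic d \<longleftrightarrow> (\<exists>r::int. \<exists>k::nat. d = r / 2 ^ k)"

text \<open>Fractional binary digits of a dyadic 0 \<le> d < 1 (no trailing zeros).\<close>
definition frac_bits :: "real \<Rightarrow> bool list" where
  "frac_bits d = (let k = (LEAST k::nat. \<exists>m::int. d * 2 ^ k = m);
                      m = nat \<lfloor>d * 2 ^ k\<rfloor>
                  in replicate (k - length (bin m)) False @ bin m)"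

text \<open>Dyadic rationals by their finite binary expansion: sign bit, then the pair of
  the integer-part digits and the fractional digits of |d|.\<close>
definition dyadic_code :: "real \<Rightarrow> bool list" where
  "dyadic_code d = (d < 0) # pair_code (bin (nat \<lfloor>\<bar>d\<bar>\<rfloor>)) (frac_bits (\<bar>d\<bar> - \<lfloor>\<bar>d\<bar>\<rfloor>))"

datatype ival = IFin real real | IWhole

definition ival_valid :: "ival \<Rightarrow> bool" where
  "ival_valid J = (case J of IFin r e \<Rightarrow> dyadic r \<and> dyadic e \<and> 0 \<le> e | IWhole \<Rightarrow> True)"

definition ival_set :: "ival \<Rightarrow> real set" where
  "ival_set J = (case J of IFin r e \<Rightarrow> {r - e..r + e} | IWhole \<Rightarrow> UNIV)"

text \<open>diam J \<le> t (the diameter of [-\<infinity>,\<infinity>] is infinite).\<close>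
definition ival_diam_le :: "ival \<Rightarrow> real \<Rightarrow> bool" where
  "ival_diam_le J t = (case J of IFin r e \<Rightarrow> 2 * e \<le> t | IWhole \<Rightarrow> False)"

definition ival_code :: "ival \<Rightarrow> bool list" where
  "ival_code J = (case J of IFin r e \<Rightarrow> pair_code (dyadic_code r) (dyadic_code e) | IWhole \<Rightarrow> [])"

definition ival_of :: "(bool list \<Rightarrow> bool list) \<Rightarrow> nat \<Rightarrow> ival" where
  "ival_of \<phi> n = (THE J. ival_valid J \<and> ival_code J = \<phi> (nat_code n))"

definition Ri_name :: "(bool list \<Rightarrow> bool list) \<Rightarrow> real \<Rightarrow> bool" where
  "Ri_name \<phi> x \<longleftrightarrow>
     (\<forall>n. \<exists>J. ival_valid J \<and> \<phi> (nat_code n) = ival_code J) \<and>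
     (\<forall>n. ival_set (ival_of \<phi> (Suc n)) \<subseteq> ival_set (ival_of \<phi> n)) \<and>
     (\<Inter>n. ival_set (ival_of \<phi> n)) = {x}"

definition Ri_dom :: "(bool list \<Rightarrow> bool list) set" where
  "Ri_dom = {\<phi>. \<exists>x. Ri_name \<phi> x}"

definition Ri_xi :: "(bool list \<Rightarrow> bool list) \<Rightarrow> real" where
  "Ri_xi \<phi> = (THE x. Ri_name \<phi> x)"

definition Ri_mu :: "(bool list \<Rightarrow> bool list) \<Rightarrow> nat \<Rightarrow> nat" where
  "Ri_mu \<phi> n = (LEAST N. ival_diam_le (ival_of \<phi> N) ((1/2) ^ n))
                 + nat \<lceil>log 2 (\<bar>Ri_xi \<phi>\<bar> + 1)\<rceil>"

end

theory Submission
  imports Defs "HOL-Library.Nat_Bijection"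
begin

text \<open>
  A single oracle machine computes the identity; on input \<open>a\<close> it only uses
  \<open>L = |a|\<close>. It asks the queries \<open>m = 0, 1, 2, \<dots>\<close> until the answer codes an
  interval of radius below \<open>2^-(L+3)\<close>, which happens at the latest for
  \<open>m = \<mu>(L+4)\<close>, and then writes the code of \<open>[c \<plusminus> 2^-L]\<close>, where \<open>c\<close> is the
  centre of that interval cut off after \<open>L + 3\<close> fractional bits and followed by
  a bit 1; thus \<open>|c - x| < 2^-(L+2)\<close>.

  The code of \<open>2^n\<close> has length \<open>n + 2\<close>, so the output name sends \<open>n\<close> to
  \<open>[c\<^sub>n \<plusminus> 2^-(n+2)]\<close> with \<open>|c\<^sub>n - x| < 2^-(n+4)\<close>. These intervals are nested,
  contain \<open>x\<close>, and have diameter \<open>2^-n\<close> at index \<open>n\<close>, so the new parameter is at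
  most \<open>n + \<mu>(0)\<close>. A query round costs \<open>O(L)\<close> steps, and the output has
  \<open>O(L + \<mu>(0))\<close> bits because the integer part of \<open>c\<close> has at most
  \<open>lb(|x| + 1)\<close> bits; so the running time is a second-order polynomial in \<open>\<mu>\<close>
  and \<open>L\<close>.
\<close>

section \<open>Binary codes of numbers and intervals\<close>

declare bin.simps[simp del]

lemma bin_0[simp]: "bin 0 = []" by (simp add: bin.simps)

lemma bin_pos: "n > 0 \<Longrightarrow> bin n = bin (n div 2) @ [odd n]"
  by (subst bin.simps) simp

definition bin_val :: "bool list \<Rightarrow> nat" where
  "bin_val b = foldl (\<lambda>acc x. 2*acc + of_bool x) 0 b"

lemma bin_val_Nil[simp]: "bin_val [] = 0" by (simp add: bin_val_def)

lemma bin_val_snoc[simp]: "bin_val (xs @ [x]) = 2 * bin_val xs + of_bool x" by (simp add: bin_val_def)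

lemma bin_val_bin[simp]: "bin_val (bin n) = n"
proof (induction n rule: bin.induct)
  case (1 n)
  show ?case
  proof (cases "n = 0")
    case True then show ?thesis by simp
  next
    case False
    then have "bin_val (bin n) = 2 * bin_val (bin (n div 2)) + of_bool (odd n)" by (simp add: bin_pos)
    also have "\<dots> = n" using 1 False by simp
    finally show ?thesis .
  qed
qed

lemma bin_val_replicate_False: "bin_val (replicate k False @ l) = bin_val l"
proof (induction l rule: rev_induct)
  case Nil
  then show ?case by (induction k) (simp_all add: replicate_append_same[symmetric] del: replicate_append_same)
next
  case (snoc x xs)
  then show ?case by (simp flip: append_assoc)
qed

lemma length_bin_le_iff: "length (bin n) \<le> k \<longleftrightarrow> n < 2^k"
proof (induction n arbitrary: k rule: bin.induct)
  case (1 n)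
  show ?case
  proof (cases "n = 0")
    case True then show ?thesis by simp
  next
    case False
    show ?thesis
    proof (cases k)
      case 0 then show ?thesis using False by (simp add: bin_pos)
    next
      case (Suc k')
      have "length (bin n) \<le> k \<longleftrightarrow> length (bin (n div 2)) \<le> k'" using False Suc by (simp add: bin_pos)
      also have "\<dots> \<longleftrightarrow> n div 2 < 2^k'" using 1 False by simp
      also have "\<dots> \<longleftrightarrow> n < 2^k" using Suc by auto
      finally show ?thesis .
    qed
  qed
qed

lemma length_bin_le: "n < 2^k \<Longrightarrow> length (bin n) \<le> k" using length_bin_le_iff by blast

lemma bin_inj: "bin m = bin n \<Longrightarrow> m = n" by (metis bin_val_bin)

lemma bin_val_less: "bin_val b < 2 ^ length b"
  by (induction b rule: rev_induct) auto

lemma replicate_bin_bin_val: "b = replicate (length b - length (bin (bin_val b))) False @ bin (bin_val b)"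
proof (induction b rule: rev_induct)
  case Nil then show ?case by simp
next
  case (snoc x xs)
  show ?case
  proof (cases "bin_val xs = 0 \<and> \<not> x")
    case True
    then have xs: "xs = replicate (length xs) False" using snoc by simp
    have "bin_val (xs @ [x]) = 0" using True by simp
    then have "replicate (length (xs @ [x]) - length (bin (bin_val (xs @ [x])))) False @ bin (bin_val (xs @ [x]))
       = replicate (Suc (length xs)) False" by simp
    also have "\<dots> = xs @ [x]" using True xs by (metis replicate_Suc replicate_append_same)
    finally show ?thesis by simp
  next
    case False
    then have pos: "2 * bin_val xs + of_bool x > 0" by auto
    have b: "bin (2 * bin_val xs + of_bool x) = bin (bin_val xs) @ [x]"
      using pos by (subst bin_pos) auto
    have le: "length (bin (bin_val xs)) \<le> length xs" using bin_val_less length_bin_le by blast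
    have "xs @ [x] = (replicate (length xs - length (bin (bin_val xs))) False @ bin (bin_val xs)) @ [x]"
      using snoc.IH by simp
    also have "\<dots> = replicate (length (xs@[x]) - length (bin (bin_val (xs@[x])))) False @ bin (bin_val (xs@[x]))"
      using b le by simp
    finally show ?thesis .
  qed
qed

lemma bin_power2: "bin (2^n) = True # replicate n False"
proof (induction n)
  case 0 then show ?case by (simp add: bin_pos)
next
  case (Suc n)
  have "bin (2^Suc n) = bin (2^n) @ [False]" by (subst bin_pos) auto
  then show ?case using Suc by (simp add: replicate_append_same[symmetric] del: replicate_append_same)
qed

lemma nat_code_eq: "nat_code n = False # True # replicate n False"
  by (simp add: nat_code_def int_code_def bin_power2 nat_power_eq)

lemma nat_code_inj: "nat_code m = nat_code n \<Longrightarrow> m = n"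
  by (simp add: nat_code_eq)

lemma length_nat_code: "length (nat_code n) = n + 2" by (simp add: nat_code_eq)

definition frac_val :: "bool list \<Rightarrow> real" where
  "frac_val b = (\<Sum>j<length b. if b!j then 1/2^(Suc j) else 0)"

lemma frac_val_Nil[simp]: "frac_val [] = 0" by (simp add: frac_val_def)

lemma frac_val_snoc[simp]: "frac_val (xs @ [x]) = frac_val xs + (if x then 1/2^(Suc (length xs)) else 0)"
  unfolding frac_val_def by (simp add: nth_append)

lemma bin_val_frac_val: "real (bin_val b) / 2 ^ length b = frac_val b"
proof (induction b rule: rev_induct)
  case Nil then show ?case by simp
next
  case (snoc x xs)
  have "real (bin_val (xs @ [x])) / 2 ^ length (xs @ [x]) = real (bin_val xs) / 2 ^ length xs + of_bool x / 2^Suc (length xs)"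
    by (simp add: field_simps)
  then show ?case using snoc by simp
qed

lemma frac_val_nonneg: "frac_val b \<ge> 0" unfolding frac_val_def by (rule sum_nonneg) auto

lemma frac_val_less_1: "frac_val b < 1"
proof -
  have "frac_val b = real (bin_val b) / 2 ^ length b" by (simp add: bin_val_frac_val)
  also have "\<dots> < 1" using bin_val_less[of b]
    by (simp add: divide_less_eq)
  finally show ?thesis .
qed

lemma frac_val_frac_bits:
  assumes "dyadic d" "0 \<le> d" "d < 1"
  shows "frac_val (frac_bits d) = d"
proof -
  obtain r :: int and k :: nat where rk: "d = r / 2^k" using assms(1) unfolding dyadic_def by blast
  have ex: "\<exists>k::nat. \<exists>m::int. d * 2 ^ k = m" using rk by (intro exI[of _ k] exI[of _ r]) simp
  define k0 where "k0 = (LEAST k::nat. \<exists>m::int. d * 2 ^ k = m)"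
  obtain m :: int where m: "d * 2 ^ k0 = m" using LeastI_ex[OF ex] unfolding k0_def by blast
  have m0: "m \<ge> 0" using m assms(2) by (metis of_int_0_le_iff zero_le_numeral zero_le_power mult_nonneg_nonneg)
  have mlt: "m < 2 ^ k0"
  proof -
    have "real_of_int m < 2 ^ k0" using m assms(3) by (simp add: flip: m)
    then show ?thesis by (metis of_int_less_iff of_int_numeral of_int_power)
  qed
  define mn where "mn = nat m"
  have mnr: "real mn = d * 2^k0" using m m0 unfolding mn_def by simp
  have mnlt: "mn < 2 ^ k0" using mlt m0 unfolding mn_def
    by (metis nat_less_iff of_nat_numeral of_nat_power)
  have fl: "nat \<lfloor>d * 2 ^ k0\<rfloor> = mn" using m unfolding mn_def by simp
  have fb: "frac_bits d = replicate (k0 - length (bin mn)) False @ bin mn"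
    unfolding frac_bits_def Let_def k0_def[symmetric] fl ..
  have len: "length (frac_bits d) = k0" using fb length_bin_le[OF mnlt] by simp
  have bvf: "bin_val (frac_bits d) = mn" using fb by (simp add: bin_val_replicate_False)
  have "frac_val (frac_bits d) = real mn / 2 ^ k0" using bin_val_frac_val[of "frac_bits d"] len bvf by simp
  also have "\<dots> = d" using mnr by simp
  finally show ?thesis .
qed

lemma odd_bin_val: "b \<noteq> [] \<Longrightarrow> last b \<Longrightarrow> odd (bin_val b)"
  by (induction b rule: rev_induct) auto

lemma frac_bits_frac_val:
  assumes "b = [] \<or> last b"
  shows "frac_bits (frac_val b) = b"
proof -
  define n where "n = length b"
  define m where "m = bin_val b"
  have d: "frac_val b = real m / 2 ^ n" using bin_val_frac_val[of b] unfolding m_def n_def by simp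
  have least: "(LEAST k::nat. \<exists>i::int. frac_val b * 2 ^ k = i) = n"
  proof (rule Least_equality)
    show "\<exists>i::int. frac_val b * 2 ^ n = i" using d by (intro exI[of _ "int m"]) simp
  next
    fix k :: nat assume "\<exists>i::int. frac_val b * 2 ^ k = i"
    then obtain i :: int where i: "frac_val b * 2 ^ k = i" by blast
    show "n \<le> k"
    proof (rule ccontr)
      assume "\<not> n \<le> k"
      then have kn: "k < n" by simp
      then have bne: "b \<noteq> []" unfolding n_def by auto
      then have odd: "odd m" using assms odd_bin_val unfolding m_def by auto
      have "real m = real m / 2^n * 2^k * 2^(n-k)" using kn
        by (simp add: field_simps flip: power_add)
      also have "\<dots> = of_int i * 2^(n-k)" using i d by simp
      finally have "int m = i * 2^(n-k)" by (metis of_int_eq_iff of_int_mult of_int_numeral of_int_of_nat_eq of_int_power)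
      then have "even (int m)" using kn by simp
      then show False using odd by simp
    qed
  qed
  have fl: "nat \<lfloor>frac_val b * 2 ^ n\<rfloor> = m" using d by simp
  show ?thesis unfolding frac_bits_def Let_def least fl
    using replicate_bin_bin_val[of b] unfolding m_def n_def by simp
qed

definition bit_at :: "bool list \<Rightarrow> nat \<Rightarrow> bool" where
  "bit_at w p \<longleftrightarrow> p < length w \<and> w ! p"

lemma bit_at_Cons_0[simp]: "bit_at (x # l) 0 = x" by (simp add: bit_at_def)

lemma bit_at_Cons_Suc[simp]: "bit_at (x # l) (Suc p) = bit_at l p" by (simp add: bit_at_def)

lemma length_concat_map_const:
  "(\<And>j. length (f j) = c) \<Longrightarrow> length (concat (map f [0..<n])) = c * n"
  by (induction n) simp_all

lemma nth_concat_map: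
  assumes "\<And>j. length (f j) = c" "i < n" "t < c"
  shows "concat (map f [0..<n]) ! (c*i+t) = f i ! t"
  using assms(2)
proof (induction n)
  case 0 then show ?case by simp
next
  case (Suc n)
  have len: "length (concat (map f [0..<n])) = c * n" using assms(1) by (rule length_concat_map_const)
  show ?case
  proof (cases "i < n")
    case True
    have "c*i+t < c * Suc i" using assms(3) by simp
    also have "c * Suc i \<le> c*n" using True by (intro mult_le_mono2) simp
    finally have "c*i+t < c*n" .
    then show ?thesis using Suc True len by (simp add: nth_append)
  next
    case False
    then have "i = n" using Suc by simp
    then show ?thesis using len assms by (simp add: nth_append)
  qed
qed

lemma length_pair_code: "length (pair_code u v) = 4 * max (length u) (length v)"
  unfolding pair_code_def by (simp add: length_concat_map_const)

lemma nth_pair_code: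
  assumes "i < max (length u) (length v)" "t < 4"
  shows "pair_code u v ! (4*i+t) = [i < length u, bit_at u i, i < length v, bit_at v i] ! t"
  unfolding pair_code_def bit_at_def by (subst nth_concat_map[where c=4]) (use assms in auto)

lemma bit_at_pair_code:
  "bit_at (pair_code u v) (4*i) = (i < length u)"
  "bit_at (pair_code u v) (4*i+1) = bit_at u i"
  "bit_at (pair_code u v) (4*i+2) = (i < length v)"
  "bit_at (pair_code u v) (4*i+3) = bit_at v i"
proof -
  have A: "bit_at (pair_code u v) (4*i+t) = (if i < max (length u) (length v) then [i < length u, bit_at u i, i < length v, bit_at v i] ! t else False)"
    if "t < 4" for t
    using nth_pair_code[of i u v t] that unfolding bit_at_def length_pair_code by auto
  show "bit_at (pair_code u v) (4*i) = (i < length u)" using A[of 0] by (auto simp: bit_at_def)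
  show "bit_at (pair_code u v) (4*i+1) = bit_at u i" using A[of 1] by (auto simp: bit_at_def)
  show "bit_at (pair_code u v) (4*i+2) = (i < length v)" using A[of 2] by (auto simp: bit_at_def)
  show "bit_at (pair_code u v) (4*i+3) = bit_at v i" using A[of 3] by (auto simp: bit_at_def)
qed

lemma list_eq_by_bit_at:
  assumes "\<And>i. i < length u \<longleftrightarrow> i < length v" "\<And>i. bit_at u i = bit_at v i"
  shows "u = v"
proof -
  have l: "length u = length v" using assms(1) by (metis less_irrefl nat_neq_iff)
  show ?thesis by (rule nth_equalityI) (use l assms(2) in \<open>auto simp: bit_at_def\<close>)
qed

lemma pair_code_inj:
  assumes "pair_code u v = pair_code u' v'"
  shows "u = u'" "v = v'"
proof -
  show "u = u'"
    by (rule list_eq_by_bit_at) (metis assms bit_at_pair_code(1), metis assms bit_at_pair_code(2))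
  show "v = v'"
    by (rule list_eq_by_bit_at) (metis assms bit_at_pair_code(3), metis assms bit_at_pair_code(4))
qed

lemma dyadic_frac_part: "dyadic d \<Longrightarrow> dyadic (\<bar>d\<bar> - of_int \<lfloor>\<bar>d\<bar>\<rfloor>)"
proof -
  assume "dyadic d"
  then obtain r :: int and k :: nat where rk: "d = r / 2^k" unfolding dyadic_def by blast
  have a: "\<bar>d\<bar> = of_int \<bar>r\<bar> / 2^k" using rk by (simp add: abs_divide)
  have "\<bar>d\<bar> - of_int \<lfloor>\<bar>d\<bar>\<rfloor> = of_int (\<bar>r\<bar> - \<lfloor>\<bar>d\<bar>\<rfloor> * 2^k) / 2^k"
    unfolding a by (simp add: field_simps)
  then show ?thesis unfolding dyadic_def by blast
qed

lemma dyadic_inverse_power2: "dyadic (1 / 2^n)"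
  unfolding dyadic_def by (intro exI[of _ 1] exI[of _ n]) simp

abbreviation int_bits :: "real \<Rightarrow> bool list" where
  "int_bits d \<equiv> bin (nat \<lfloor>\<bar>d\<bar>\<rfloor>)"

abbreviation frac_part_bits :: "real \<Rightarrow> bool list" where
  "frac_part_bits d \<equiv> frac_bits (\<bar>d\<bar> - of_int \<lfloor>\<bar>d\<bar>\<rfloor>)"

lemma dyadic_code_eq: "dyadic_code d = (d < 0) # pair_code (int_bits d) (frac_part_bits d)"
  by (simp add: dyadic_code_def)

lemma abs_dyadic_split: "dyadic d \<Longrightarrow> \<bar>d\<bar> = real (nat \<lfloor>\<bar>d\<bar>\<rfloor>) + frac_val (frac_part_bits d)"
proof -
  assume dy: "dyadic d"
  have a: "0 \<le> \<bar>d\<bar> - of_int \<lfloor>\<bar>d\<bar>\<rfloor>" "\<bar>d\<bar> - of_int \<lfloor>\<bar>d\<bar>\<rfloor> < 1"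
    by linarith+
  have "frac_val (frac_part_bits d) = \<bar>d\<bar> - of_int \<lfloor>\<bar>d\<bar>\<rfloor>" using frac_val_frac_bits[OF dyadic_frac_part[OF dy] a] .
  moreover have "real (nat \<lfloor>\<bar>d\<bar>\<rfloor>) = of_int \<lfloor>\<bar>d\<bar>\<rfloor>" by simp
  ultimately show ?thesis by simp
qed

lemma dyadic_code_inj:
  assumes "dyadic d" "dyadic d'" "dyadic_code d = dyadic_code d'"
  shows "d = d'"
proof -
  have s: "(d < 0) = (d' < 0)" and p: "pair_code (int_bits d) (frac_part_bits d) = pair_code (int_bits d') (frac_part_bits d')"
    using assms(3) by (simp_all add: dyadic_code_eq)
  have "nat \<lfloor>\<bar>d\<bar>\<rfloor> = nat \<lfloor>\<bar>d'\<bar>\<rfloor>" using pair_code_inj(1)[OF p] bin_inj by blast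
  moreover have "frac_part_bits d = frac_part_bits d'" using pair_code_inj(2)[OF p] .
  ultimately have "\<bar>d\<bar> = \<bar>d'\<bar>" using abs_dyadic_split[OF assms(1)] abs_dyadic_split[OF assms(2)] by simp
  then show ?thesis using s by (cases "d < 0"; cases "d' < 0") auto
qed

lemma length_pair_code_ge: "u \<noteq> [] \<Longrightarrow> length (pair_code u v) \<ge> 4"
  by (cases u) (auto simp: length_pair_code)

lemma ival_code_inj:
  assumes "ival_valid J" "ival_valid J'" "ival_code J = ival_code J'"
  shows "J = J'"
proof (cases J)
  case (IFin r e)
  show ?thesis
  proof (cases J')
    case (IFin r' e')
    have "pair_code (dyadic_code r) (dyadic_code e) = pair_code (dyadic_code r') (dyadic_code e')"
      using assms(3) \<open>J = IFin r e\<close> IFin by (simp add: ival_code_def)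
    then have "dyadic_code r = dyadic_code r'" "dyadic_code e = dyadic_code e'" using pair_code_inj by blast+
    then show ?thesis using assms(1,2) \<open>J = IFin r e\<close> IFin dyadic_code_inj by (auto simp: ival_valid_def)
  next
    case IWhole
    then show ?thesis using assms(3) \<open>J = IFin r e\<close> length_pair_code_ge[of "dyadic_code r" "dyadic_code e"]
      by (auto simp: ival_code_def dyadic_code_def)
  qed
next
  case IWhole
  then show ?thesis
  proof (cases J')
    case (IFin r' e')
    then show ?thesis using assms(3) IWhole length_pair_code_ge[of "dyadic_code r'" "dyadic_code e'"]
      by (auto simp: ival_code_def dyadic_code_def)
  qed simp
qed

lemma ival_of_eq: "ival_valid J \<Longrightarrow> \<phi> (nat_code n) = ival_code J \<Longrightarrow> ival_of \<phi> n = J"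
  unfolding ival_of_def by (rule the_equality) (auto intro: ival_code_inj)

lemma frac_val_append: "frac_val (xs @ ys) = frac_val xs + frac_val ys / 2 ^ length xs"
proof (induction ys rule: rev_induct)
  case Nil then show ?case by simp
next
  case (snoc y ys)
  then show ?case by (simp add: field_simps power_add flip: append_assoc)
qed

lemma frac_val_replicate_False[simp]: "frac_val (replicate n False) = 0"
  by (induction n) (simp_all add: replicate_append_same[symmetric] del: replicate_append_same)

lemma frac_val_take: "frac_val (take k b) \<le> frac_val b \<and> frac_val b < frac_val (take k b) + 1 / 2^k"
proof (cases "k \<le> length b")
  case True
  have "frac_val b = frac_val (take k b) + frac_val (drop k b) / 2^k"
    using frac_val_append[of "take k b" "drop k b"] True by simp
  then show ?thesis using frac_val_nonneg[of "drop k b"] frac_val_less_1[of "drop k b"] by (simp add: divide_strict_right_mono)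
next
  case False
  then show ?thesis by simp
qed

lemma frac_val_ge_bit: "bit_at b j \<Longrightarrow> frac_val b \<ge> 1 / 2^(Suc j)"
  unfolding frac_val_def bit_at_def
  by (rule order_trans[OF _ member_le_sum[of j]]) auto

lemma take_no_bits: "(\<forall>j<k. \<not> bit_at b j) \<Longrightarrow> take k b = replicate (min k (length b)) False"
  by (rule nth_equalityI) (auto simp: bit_at_def)

lemma frac_val_small: "(\<forall>j<k. \<not> bit_at b j) \<Longrightarrow> frac_val b < 1 / 2^k"
  using frac_val_take[of k b] take_no_bits[of k b] by simp

lemma dyadic_less_inverse_power2_iff:
  assumes "0 \<le> e" "dyadic e"
  shows "e < 1 / 2^k \<longleftrightarrow> int_bits e = [] \<and> (\<forall>j<k. \<not> bit_at (frac_part_bits e) j)"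
proof
  assume small: "e < 1 / 2^k"
  have "(1::real)/2^k \<le> 1" by simp
  then have "e < 1" using small by linarith
  then have "\<lfloor>\<bar>e\<bar>\<rfloor> = 0" using assms(1) by (simp add: floor_eq_iff)
  moreover have "frac_val (frac_part_bits e) = e" if "\<lfloor>\<bar>e\<bar>\<rfloor> = 0"
    using abs_dyadic_split[OF assms(2)] that assms(1) by simp
  moreover have "\<not> bit_at (frac_part_bits e) j" if "frac_val (frac_part_bits e) = e" "j < k" for j
  proof
    assume "bit_at (frac_part_bits e) j"
    then have "frac_val (frac_part_bits e) \<ge> 1/2^Suc j" by (rule frac_val_ge_bit)
    moreover have "(1::real)/2^k \<le> 1/2^Suc j"
      using that(2) by (intro divide_left_mono power_increasing) auto
    ultimately show False using that(1) small by simp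
  qed
  ultimately show "int_bits e = [] \<and> (\<forall>j<k. \<not> bit_at (frac_part_bits e) j)" by simp
next
  assume bits: "int_bits e = [] \<and> (\<forall>j<k. \<not> bit_at (frac_part_bits e) j)"
  then have "nat \<lfloor>\<bar>e\<bar>\<rfloor> = 0" by (metis bin_val_bin bin_val_Nil)
  then have "e = frac_val (frac_part_bits e)" using abs_dyadic_split[OF assms(2)] assms(1) by simp
  then show "e < 1 / 2^k" using frac_val_small[of k "frac_part_bits e"] bits by simp
qed

section \<open>Names of interval reals\<close>

lemma zero_if_le_halvings:
  fixes d c :: real
  assumes "\<forall>n. \<bar>d\<bar> \<le> c / 2^n"
  shows "d = 0"
proof (rule ccontr)
  assume d: "d \<noteq> 0"
  then have dp: "0 < \<bar>d\<bar>" by simp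
  show False
  proof (cases "c \<le> 0")
    case True
    then show False using assms[rule_format, of 0] dp by simp
  next
    case False
    then have cp: "0 < c" by simp
    obtain n where n: "(1/2::real)^n < \<bar>d\<bar> / c" using real_arch_pow_inv[of "\<bar>d\<bar> / c" "1/2"] dp cp by auto
    have "c / 2^n = c * (1/2)^n" by (simp add: power_one_over)
    also have "\<dots> < c * (\<bar>d\<bar> / c)" using n cp by (intro mult_strict_left_mono) auto
    also have "\<dots> = \<bar>d\<bar>" using cp by simp
    finally show False using assms[rule_format, of n] by simp
  qed
qed

lemma Ri_nameI:
  assumes valid: "\<And>n. ival_valid (J n)" and code: "\<And>n. \<psi> (nat_code n) = ival_code (J n)"
    and nested: "\<And>n. ival_set (J (Suc n)) \<subseteq> ival_set (J n)"
    and mem: "\<And>n. x \<in> ival_set (J n)" and diam: "\<And>n. ival_diam_le (J n) (C / 2^n)"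
  shows "Ri_name \<psi> x"
proof -
  have J: "ival_of \<psi> n = J n" for n by (rule ival_of_eq[of "J n" \<psi> n, OF valid code])
  have "y = x" if y: "\<And>n. y \<in> ival_set (J n)" for y
  proof -
    have "\<bar>y - x\<bar> \<le> C / 2^n" for n
    proof (cases "J n")
      case (IFin r e)
      then show ?thesis using y[of n] mem[of n] diam[of n] by (auto simp: ival_set_def ival_diam_le_def)
    next
      case IWhole
      then show ?thesis using diam[of n] by (simp add: ival_diam_le_def)
    qed
    then have "\<forall>n. \<bar>y - x\<bar> \<le> C / 2^n" by blast
    then have "y - x = 0" by (rule zero_if_le_halvings)
    then show ?thesis by simp
  qed
  then have inter: "(\<Inter>n. ival_set (J n)) = {x}" using mem by auto
  show ?thesis unfolding Ri_name_def J
  proof (intro conjI allI)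
    show "\<exists>J'. ival_valid J' \<and> \<psi> (nat_code n) = ival_code J'" for n using valid code by blast
  qed (fact nested inter)+
qed

lemma Ri_xi_eqI:
  assumes "Ri_name \<phi> x"
  shows "Ri_xi \<phi> = x"
  unfolding Ri_xi_def
proof (rule the_equality)
  fix y assume "Ri_name \<phi> y"
  then have "{y} = (\<Inter>n. ival_set (ival_of \<phi> n))" by (simp only: Ri_name_def)
  also have "\<dots> = {x}" using assms by (simp only: Ri_name_def)
  finally show "y = x" by simp
qed (fact assms)

lemma shifted_point_mem:
  assumes "x \<in> ival_set J" "\<not> ival_diam_le J \<epsilon>" "0 < \<epsilon>"
  shows "x + \<epsilon>/2 \<in> ival_set J \<or> x - \<epsilon>/2 \<in> ival_set J"
proof (cases J)
  case (IFin r e)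
  then show ?thesis using assms by (auto simp: ival_set_def ival_diam_le_def)
next
  case IWhole then show ?thesis by (simp add: ival_set_def)
qed

locale interval_name =
  fixes \<phi> :: "bool list \<Rightarrow> bool list" and x :: real
  assumes is_name: "Ri_name \<phi> x"
begin

lemma Ri_name_valid: "ival_valid (ival_of \<phi> n)" and Ri_name_code: "\<phi> (nat_code n) = ival_code (ival_of \<phi> n)"
proof -
  obtain J where J: "ival_valid J" "\<phi> (nat_code n) = ival_code J" using is_name unfolding Ri_name_def by blast
  then have "ival_of \<phi> n = J" by (rule ival_of_eq)
  then show "ival_valid (ival_of \<phi> n)" "\<phi> (nat_code n) = ival_code (ival_of \<phi> n)" using J by auto
qed

lemma Ri_name_nested: "n \<le> m \<Longrightarrow> ival_set (ival_of \<phi> m) \<subseteq> ival_set (ival_of \<phi> n)"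
proof -
  assume "n \<le> m"
  have "\<And>k. ival_set (ival_of \<phi> (Suc k)) \<subseteq> ival_set (ival_of \<phi> k)" using is_name unfolding Ri_name_def by blast
  then show ?thesis using lift_Suc_antimono_le[of "\<lambda>k. ival_set (ival_of \<phi> k)"] \<open>n \<le> m\<close> by blast
qed

lemma Ri_name_Inter: "(\<Inter>n. ival_set (ival_of \<phi> n)) = {x}" using is_name unfolding Ri_name_def by blast

lemma Ri_name_mem: "x \<in> ival_set (ival_of \<phi> n)" using Ri_name_Inter by blast

lemma Ri_xi_eq: "Ri_xi \<phi> = x"
  using is_name by (rule Ri_xi_eqI)

text \<open>
  If every interval had diameter above \<open>\<epsilon>\<close>, then by nestedness one of \<open>x \<plusminus> \<epsilon>/2\<close>
  would lie in all of them.
\<close>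

lemma Ri_name_diam_small: "0 < \<epsilon> \<Longrightarrow> \<exists>N. ival_diam_le (ival_of \<phi> N) \<epsilon>"
proof (rule ccontr)
  assume e: "0 < \<epsilon>" and "\<not> (\<exists>N. ival_diam_le (ival_of \<phi> N) \<epsilon>)"
  then have nd: "\<And>N. \<not> ival_diam_le (ival_of \<phi> N) \<epsilon>" by blast
  let ?S = "\<lambda>N. ival_set (ival_of \<phi> N)"
  have both: "\<And>N. x + \<epsilon>/2 \<in> ?S N \<or> x - \<epsilon>/2 \<in> ?S N" using shifted_point_mem[OF Ri_name_mem nd e] by blast
  have "\<exists>y. y \<noteq> x \<and> (\<forall>N. y \<in> ?S N)"
  proof (cases "\<forall>N. x + \<epsilon>/2 \<in> ?S N")
    case True then show ?thesis using e by (intro exI[of _ "x + \<epsilon>/2"]) auto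
  next
    case False
    then obtain N0 where N0: "x + \<epsilon>/2 \<notin> ?S N0" by blast
    have "x - \<epsilon>/2 \<in> ?S N" for N
    proof (cases "N0 \<le> N")
      case True
      then have "x + \<epsilon>/2 \<notin> ?S N" using N0 Ri_name_nested by blast
      then show ?thesis using both by blast
    next
      case False
      then have "x - \<epsilon>/2 \<in> ?S N0" using N0 both by blast
      then show ?thesis using Ri_name_nested[of N N0] False by auto
    qed
    then show ?thesis using e by (intro exI[of _ "x - \<epsilon>/2"]) auto
  qed
  then show False using Ri_name_Inter by blast
qed

lemma ex_diam_le: "\<exists>N. ival_diam_le (ival_of \<phi> N) ((1/2)^n)"
  by (rule Ri_name_diam_small) simp

lemma mono_Ri_mu: "mono (Ri_mu \<phi>)"
proof (rule monoI)
  fix n m :: nat assume nm': "n \<le> m"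
  let ?Nm = "LEAST N. ival_diam_le (ival_of \<phi> N) ((1/2)^m)"
  have "ival_diam_le (ival_of \<phi> ?Nm) ((1/2)^m)" by (rule LeastI_ex[OF ex_diam_le])
  moreover have "(1/2::real)^m \<le> (1/2)^n" using nm' by (rule power_decreasing) auto
  ultimately have "ival_diam_le (ival_of \<phi> ?Nm) ((1/2)^n)"
  proof (cases "ival_of \<phi> ?Nm")
    case (IFin r e)
    assume a: "ival_diam_le (ival_of \<phi> ?Nm) ((1/2)^m)" and pw: "(1/2::real)^m \<le> (1/2)^n"
    then have "2 * e \<le> (1/2)^m" using IFin by (simp add: ival_diam_le_def)
    then have "2 * e \<le> (1/2)^n" using pw by (rule order_trans)
    then show ?thesis using IFin by (simp add: ival_diam_le_def)
  qed (simp add: ival_diam_le_def)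
  then have "(LEAST N. ival_diam_le (ival_of \<phi> N) ((1/2)^n)) \<le> ?Nm" by (rule Least_le)
  then show "Ri_mu \<phi> n \<le> Ri_mu \<phi> m" unfolding Ri_mu_def by simp
qed

end

lemma Ri_dom_interval_name: "\<phi> \<in> Ri_dom \<Longrightarrow> \<exists>x. interval_name \<phi> x"
  unfolding Ri_dom_def by (auto intro: interval_name.intro)

definition floor_dyadic :: "real \<Rightarrow> nat \<Rightarrow> real" where "floor_dyadic x n = of_int \<lfloor>x * 2^n\<rfloor> / 2^n"

definition floor_ival :: "real \<Rightarrow> nat \<Rightarrow> ival" where
  "floor_ival x n = IFin (floor_dyadic x n) (1 / 2^n)"

definition floor_name :: "real \<Rightarrow> bool list \<Rightarrow> bool list" where
  "floor_name x w = ival_code (floor_ival x (LEAST n. nat_code n = w))"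

lemma floor_name_code: "floor_name x (nat_code n) = ival_code (floor_ival x n)"
proof -
  have "(LEAST m. nat_code m = nat_code n) = n"
    by (rule Least_equality) (auto dest: nat_code_inj)
  then show ?thesis by (simp add: floor_name_def)
qed

lemma floor_ival_valid: "ival_valid (floor_ival x n)"
  unfolding floor_ival_def floor_dyadic_def ival_valid_def ival.case
proof (intro conjI)
  show "dyadic (real_of_int \<lfloor>x * 2 ^ n\<rfloor> / 2 ^ n)" unfolding dyadic_def by blast
qed (simp_all add: dyadic_inverse_power2)

lemma ival_set_floor_ival: "ival_set (floor_ival x n) = {floor_dyadic x n - 1/2^n .. floor_dyadic x n + 1/2^n}"
  by (simp add: floor_ival_def ival_set_def floor_dyadic_def)

lemma floor_dyadic_le: "floor_dyadic x n \<le> x" "x < floor_dyadic x n + 1/2^n"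
proof -
  let ?p = "(2::real)^n"
  have p: "0 < ?p" by simp
  have f: "of_int \<lfloor>x * ?p\<rfloor> \<le> x * ?p" "x * ?p < of_int \<lfloor>x * ?p\<rfloor> + 1" by linarith+
  show "floor_dyadic x n \<le> x" unfolding floor_dyadic_def using f(1) p by (simp add: pos_divide_le_eq)
  have "x < (of_int \<lfloor>x * ?p\<rfloor> + 1) / ?p" using f(2) p by (simp add: pos_less_divide_eq)
  then show "x < floor_dyadic x n + 1/2^n" unfolding floor_dyadic_def by (simp add: add_divide_distrib)
qed

lemma floor_dyadic_Suc: "floor_dyadic x n \<le> floor_dyadic x (Suc n) \<and> floor_dyadic x (Suc n) \<le> floor_dyadic x n + 1/2^(Suc n)"
proof -
  let ?p = "(2::real)^n"
  define A where "A = \<lfloor>x * ?p\<rfloor>"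
  define B where "B = \<lfloor>x * (2 * ?p)\<rfloor>"
  have AB1: "2 * A \<le> B" unfolding A_def B_def
    by (simp add: le_floor_iff)
  have AB2: "B \<le> 2 * A + 1"
  proof -
    have "x * ?p < of_int A + 1" unfolding A_def by linarith
    then have "x * (2 * ?p) < of_int (2 * A + 2)" by simp
    then have "B < 2 * A + 2" unfolding B_def by (simp add: floor_less_iff)
    then show ?thesis by simp
  qed
  have c1: "floor_dyadic x (Suc n) = of_int B / (2 * ?p)" unfolding floor_dyadic_def B_def by (simp add: mult.commute mult.left_commute)
  have c0: "floor_dyadic x n = of_int (2 * A) / (2 * ?p)" unfolding floor_dyadic_def A_def by simp
  have "floor_dyadic x (Suc n) - floor_dyadic x n = of_int (B - 2 * A) / (2 * ?p)" unfolding c1 c0 by (simp add: diff_divide_distrib)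
  moreover have "0 \<le> of_int (B - 2 * A) / (2 * ?p)" using AB1 by simp
  moreover have "of_int (B - 2 * A) / (2 * ?p) \<le> 1 / (2 * ?p)" using AB2 by (intro divide_right_mono) simp_all
  ultimately show ?thesis by simp
qed

lemma floor_name_Ri_name: "Ri_name (floor_name x) x"
proof (rule Ri_nameI[where C = 2])
  fix n
  show "ival_set (floor_ival x (Suc n)) \<subseteq> ival_set (floor_ival x n)"
    unfolding ival_set_floor_ival using floor_dyadic_Suc[of x n] by auto
  show "x \<in> ival_set (floor_ival x n)"
    unfolding ival_set_floor_ival using floor_dyadic_le[of x n] by simp
  show "ival_diam_le (floor_ival x n) (2 / 2^n)"
    by (simp add: floor_ival_def ival_diam_le_def)
qed (rule floor_ival_valid floor_name_code)+

lemma Ri_xi_surj: "Ri_xi ` Ri_dom = UNIV"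
proof (intro equalityI subsetI)
  fix x :: real
  have "floor_name x \<in> Ri_dom" using floor_name_Ri_name unfolding Ri_dom_def by blast
  moreover have "Ri_xi (floor_name x) = x" using floor_name_Ri_name by (rule Ri_xi_eqI)
  ultimately show "x \<in> Ri_xi ` Ri_dom" by (metis image_eqI)
qed simp

lemma preparametrised_Ri: "preparametrised_space Ri_dom Ri_xi Ri_mu"
  unfolding preparametrised_space_def
proof (intro conjI ballI Ri_xi_surj)
  fix \<phi> assume "\<phi> \<in> Ri_dom"
  then obtain x where "interval_name \<phi> x" using Ri_dom_interval_name by blast
  then show "mono (Ri_mu \<phi>)" by (rule interval_name.mono_Ri_mu)
qed

section \<open>An oracle machine for the identity\<close>

text \<open>
  Tapes: 0 input, 1 query, 2 answer, 3 output, and 4 a counter \<open>0 1\<dots>1\<close> holding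
  the input length \<open>L\<close>. \<open>Init\<close>, \<open>Init2\<close>, \<open>Copy\<close> and \<open>Rew\<close> write the counter and the
  query \<open>nat_code 0\<close>. After each query \<open>Test\<close> and \<open>Scan\<close> check \<open>narrow_code\<close> on the
  answer and continue with \<open>Inc\<close> (ask the next query) or \<open>Flag\<close> (mark the output
  tape and ask the same query again). Once the mark is set, \<open>O0\<close>, \<dots>, \<open>O4\<close> write the
  first output block and \<open>Read\<close>/\<open>Write\<close> translate the answer one 16-bit block
  \<open>j\<close> at a time: \<open>Read k p i f a b x\<close> is at bit \<open>k\<close> of the block and has collected
  whether the centre has an integer bit \<open>j\<close> (\<open>p\<close>), that bit (\<open>i\<close>), its fractional
  bit \<open>j\<close> (\<open>f\<close>), and whether \<open>j < L\<close> and \<open>j + 1 < L\<close> (\<open>a\<close>, \<open>b\<close>); \<open>x\<close> is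
  \<open>min 5 (j - L)\<close>.
\<close>

datatype ctrl = Init | Halt | Query | Disp | Init2 | Copy | Rew | Inc | Flag
  | O0 | O1 | O2F | O2T | O3 | O4
  | Test nat | Scan nat nat | Read nat bool bool bool bool bool nat | Write nat bool bool bool bool bool nat

definition flags_code :: "bool \<Rightarrow> bool \<Rightarrow> bool \<Rightarrow> bool \<Rightarrow> bool \<Rightarrow> nat" where
  "flags_code p i f a b = of_bool p + 2 * of_bool i + 4 * of_bool f + 8 * of_bool a + 16 * of_bool b"

lemma flags_code_inj: "flags_code p i f a b = flags_code p' i' f' a' b' \<Longrightarrow> p = p' \<and> i = i' \<and> f = f' \<and> a = a' \<and> b = b'"
  unfolding flags_code_def by (cases p; cases i; cases f; cases a; cases b; cases p'; cases i'; cases f'; cases a'; cases b'; simp)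

text \<open>
  States 0 to 3 are the start, halting, query and after-query states of \<open>otm\<close>.
  Every state the machine reaches satisfies \<open>small_state\<close> and hence has a code
  below \<open>n_states\<close>, so the clipping in \<open>id_delta\<close> never takes effect.
\<close>

fun state_code :: "ctrl \<Rightarrow> nat" where
  "state_code Init = 0" | "state_code Halt = 1" | "state_code Query = 2" | "state_code Disp = 3" | "state_code Init2 = 4" | "state_code Copy = 5"
| "state_code Rew = 6" | "state_code Inc = 7" | "state_code Flag = 8" | "state_code O0 = 9" | "state_code O1 = 10" | "state_code O2F = 11" | "state_code O2T = 12"
| "state_code O3 = 13" | "state_code O4 = 14"
| "state_code (Test k) = 16 + 4 * k"
| "state_code (Scan k x) = 17 + 4 * prod_encode (k, x)"
| "state_code (Read k p i f a b x) = 18 + 4 * prod_encode (k, prod_encode (flags_code p i f a b, x))"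
| "state_code (Write k p i f a b x) = 19 + 4 * prod_encode (k, prod_encode (flags_code p i f a b, x))"

lemma inj_state_code: "inj state_code"
proof (rule injI)
  fix s1 s2 assume "state_code s1 = state_code s2"
  then show "s1 = s2"
    by (cases s1; cases s2; simp; presburger?; auto dest: flags_code_inj)
qed

declare state_code.simps[simp del]

definition stay :: "dir list" where "stay = [DN,DN,DN,DN,DN]"

text \<open>
  Output block \<open>j\<close>, laid out as in \<open>bit_at_ival_pair\<close> for the code of
  \<open>[trunc_centre r L \<plusminus> 2^-L]\<close>: the fractional part of the centre has \<open>L + 4\<close> bits
  (\<open>x \<le> 4\<close>) and ends with a 1 (\<open>x = 4\<close>), that of the radius is \<open>0\<dots>01\<close> of
  length \<open>L\<close>.
\<close>

definition out_bit :: "nat \<Rightarrow> bool \<Rightarrow> bool \<Rightarrow> bool \<Rightarrow> bool \<Rightarrow> bool \<Rightarrow> nat \<Rightarrow> bool" where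
  "out_bit k p i f a b x = [p \<or> x \<le> 4, p, a, False, p \<or> x \<le> 4, i, a, False,
     p \<or> x \<le> 4, x \<le> 4, a, a, p \<or> x \<le> 4, (x \<le> 3 \<and> f) \<or> x = 4, a, a \<and> \<not> b] ! k"

fun transition :: "ctrl \<Rightarrow> bool option list \<Rightarrow> ctrl \<times> bool option list \<times> dir list" where
  "transition Init s = (Init2, s[1 := Some False, 4 := Some False], stay[1 := DR, 4 := DR])"
| "transition Init2 s = (Copy, s[1 := Some True], stay[1 := DR])"
| "transition Copy s = (if s!0 \<noteq> None then (Copy, s[4 := Some True], stay[0 := DR, 4 := DR]) else (Rew, s, stay))"
| "transition Rew s = (if s!4 = Some False then (Query, s, stay) else (Rew, s, stay[4 := DL]))"
| "transition Inc s = (Rew, s[1 := Some False], stay[1 := DR])"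
| "transition Flag s = (Rew, s[3 := Some True], stay)"
| "transition Disp s = (if s!3 = Some True then (O0, s, stay) else (Test 0, s, stay))"
| "transition (Test k) s = (if k = 0 then (if s!2 = Some True then (Test 1, s, stay[2:=DR]) else (Inc, s, stay))
     else if k = 7 then (if s!2 = Some True then (Inc, s, stay) else (Test 8, s, stay[2:=DR]))
     else if k < 15 then (Test (k+1), s, stay[2:=DR])
     else (Scan 0 0, s, stay[2:=DR, 4:=DR]))"
| "transition (Scan k x) s = (if k = 0 then (let x' = (if s!4 = Some True then min x 5 else min 5 (x+1)) in
        if 4 \<le> x' then (Flag, s, stay) else (Scan 1 x', s, stay[2:=DR]))
     else if k = 3 then (if s!2 = Some True then (Inc, s, stay) else (Scan 4 (min x 5), s, stay[2:=DR]))
     else if k < 15 then (Scan (k+1) (min x 5), s, stay[2:=DR])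
     else (Scan 0 (min x 5), s, stay[2:=DR, 4:=DR]))"
| "transition O0 s = (O1, s, stay[2:=DR])"
| "transition O1 s = ((if s!2 = Some True then O2T else O2F), s[3 := Some True], stay[2:=DR, 3:=DR])"
| "transition O2F s = (O3, s[3 := Some False], stay[2:=DR, 3:=DR])"
| "transition O2T s = (O3, s[3 := Some True], stay[2:=DR, 3:=DR])"
| "transition O3 s = (O4, s[3 := Some True], stay[2:=DR, 3:=DR])"
| "transition O4 s = (Read 0 False False False False False 0, s[3 := Some False], stay[3:=DR, 4:=DR])"
| "transition (Read k p i f a b x) s = (if k = 0 then (let a' = (s!4 = Some True) in
       (Read 1 p i f a' b (if a' then min x 5 else min 5 (x+1)), s, stay[2:=DR, 4:=DR]))
     else if k = 1 then (Read 2 (s!2 = Some True) i f a (s!4 = Some True) (min x 5), s, stay[2:=DR])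
     else if k = 5 then (Read 6 p (s!2 = Some True) f a b (min x 5), s, stay[2:=DR])
     else if k = 13 then (Read 14 p i (s!2 = Some True) a b (min x 5), s, stay[2:=DR])
     else if k < 15 then (Read (k+1) p i f a b (min x 5), s, stay[2:=DR])
     else if \<not> p \<and> 5 \<le> x then (Halt, s, stay)
     else (Write 0 p i f a b (min x 5), s, stay[2:=DR]))"
| "transition (Write k p i f a b x) s = ((if k < 15 then Write (k+1) p i f a b (min x 5) else Read 0 False False False False False (min x 5)),
      s[3 := Some (out_bit k p i f a b x)], stay[3:=DR])"
| "transition Halt s = (Halt, s, stay)"
| "transition Query s = (Query, s, stay)"

lemma length_transition: "length s = 5 \<Longrightarrow> length (fst (snd (transition ctrl s))) = 5 \<and> length (snd (snd (transition ctrl s))) = 5"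
  by (cases ctrl) (auto simp: stay_def Let_def)

definition n_states :: nat where "n_states = 2000000"

definition id_delta :: "nat \<Rightarrow> bool option list \<Rightarrow> nat \<times> bool option list \<times> dir list" where
  "id_delta q s = (case transition (inv state_code q) s of (st', ws, ds) \<Rightarrow> (if state_code st' < n_states then state_code st' else 0, ws, ds))"

definition id_machine :: otm where "id_machine = OTM n_states 1 id_delta"

lemma otm_wf_id_machine: "otm_wf id_machine"
  unfolding otm_wf_def id_machine_def id_delta_def n_states_def by (auto split: prod.splits)

fun small_state :: "ctrl \<Rightarrow> bool" where
  "small_state (Test k) = (k \<le> 15)"
| "small_state (Scan k x) = (k \<le> 15 \<and> x \<le> 5)"
| "small_state (Read k p i f a b x) = (k \<le> 15 \<and> x \<le> 5)"
| "small_state (Write k p i f a b x) = (k \<le> 15 \<and> x \<le> 5)"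
| "small_state _ = True"

lemma triangle_mono: "m \<le> n \<Longrightarrow> triangle m \<le> triangle n"
  unfolding triangle_def by (intro div_le_mono mult_le_mono) auto

lemma prod_encode_mono: "a \<le> a' \<Longrightarrow> b \<le> b' \<Longrightarrow> prod_encode (a, b) \<le> prod_encode (a', b')"
  unfolding prod_encode_def using triangle_mono[of "a+b" "a'+b'"] by simp

lemma flags_code_le: "flags_code p i f a b \<le> 31" unfolding flags_code_def by (cases p; cases i; cases f; cases a; cases b; simp)

lemma state_code_less: "small_state ctrl \<Longrightarrow> state_code ctrl < n_states"
proof (cases ctrl)
  case (Scan k x)
  assume "small_state ctrl"
  then have "prod_encode (k, x) \<le> prod_encode (15, 5)" using Scan by (intro prod_encode_mono) auto
  also have "\<dots> = 225" by (simp add: prod_encode_def triangle_def)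
  finally show ?thesis using Scan by (simp add: n_states_def state_code.simps)
next
  case (Read k p i f a b x)
  assume "small_state ctrl"
  then have "prod_encode (flags_code p i f a b, x) \<le> prod_encode (31, 5)" using Read flags_code_le by (intro prod_encode_mono) auto
  also have "\<dots> = 697" by (simp add: prod_encode_def triangle_def)
  finally have "prod_encode (k, prod_encode (flags_code p i f a b, x)) \<le> prod_encode (15, 697)"
    using Read \<open>small_state ctrl\<close> by (intro prod_encode_mono) auto
  also have "\<dots> = 253843" by (simp add: prod_encode_def triangle_def)
  finally show ?thesis using Read by (simp add: n_states_def state_code.simps)
next
  case (Write k p i f a b x)
  assume "small_state ctrl"
  then have "prod_encode (flags_code p i f a b, x) \<le> prod_encode (31, 5)" using Write flags_code_le by (intro prod_encode_mono) auto
  also have "\<dots> = 697" by (simp add: prod_encode_def triangle_def)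
  finally have "prod_encode (k, prod_encode (flags_code p i f a b, x)) \<le> prod_encode (15, 697)"
    using Write \<open>small_state ctrl\<close> by (intro prod_encode_mono) auto
  also have "\<dots> = 253843" by (simp add: prod_encode_def triangle_def)
  finally show ?thesis using Write by (simp add: n_states_def state_code.simps)
qed (auto simp: n_states_def state_code.simps)

definition state_code_clip :: "ctrl \<Rightarrow> nat" where "state_code_clip ctrl = (if state_code ctrl < n_states then state_code ctrl else 0)"

lemma state_code_clip_small[simp]: "small_state ctrl \<Longrightarrow> state_code_clip ctrl = state_code ctrl" using state_code_less by (simp add: state_code_clip_def)

lemma state_code_eq_iff[simp]: "state_code s1 = state_code s2 \<longleftrightarrow> s1 = s2" using inj_state_code by (auto dest: injD)

lemma state_code_eq_1: "state_code ctrl = 1 \<longleftrightarrow> ctrl = Halt" using state_code_eq_iff[of ctrl Halt] by (simp add: state_code.simps)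

lemma state_code_eq_2: "state_code ctrl = 2 \<longleftrightarrow> ctrl = Query" using state_code_eq_iff[of ctrl Query] by (simp add: state_code.simps)

lemma upt5: "[0..<5] = [0::nat,1,2,3,4]" by (simp add: upt_rec)

lemma step_id_machine:
  assumes "ctrl \<noteq> Halt" "ctrl \<noteq> Query"
  shows "otm_step \<phi> id_machine (state_code ctrl, [t0,t1,t2,t3,t4]) =
    (case transition ctrl [tape_read t0, tape_read t1, tape_read t2, tape_read t3, tape_read t4] of (st', ws, ds) \<Rightarrow>
      (state_code_clip st', [tape_write_move t0 (ws!0) (ds!0), tape_write_move t1 (ws!1) (ds!1),
        tape_write_move t2 (ws!2) (ds!2), tape_write_move t3 (ws!3) (ds!3), tape_write_move t4 (ws!4) (ds!4)]))"
proof -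
  obtain st' ws ds where tr: "transition ctrl [tape_read t0, tape_read t1, tape_read t2, tape_read t3, tape_read t4] = (st', ws, ds)"
    by (metis prod_cases3)
  have l: "length ws = 5" "length ds = 5" using length_transition[of "[tape_read t0, tape_read t1, tape_read t2, tape_read t3, tape_read t4]" ctrl] tr by auto
  have "state_code ctrl \<noteq> 1" "state_code ctrl \<noteq> 2" using assms state_code_eq_1 state_code_eq_2 by auto
  moreover have "ws \<noteq> []" "ds \<noteq> []" using l by auto
  ultimately show ?thesis using tr l
    by (simp add: otm_step_def id_machine_def id_delta_def inj_on_def upt5 state_code_clip_def Let_def eval_nat_numeral)
qed

lemma step_query: "otm_step \<phi> id_machine (state_code Query, [t0,t1,t2,t3,t4]) = (state_code Disp, [t0,t1,string_tape (\<phi> (tape_contents t1)),t3,t4])"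
  by (simp add: otm_step_def state_code.simps)

lemma tape_read_pair[simp]: "tape_read (f, h) = f h" by (simp add: tape_read_def)

lemma tape_write_move_pair[simp]: "tape_write_move (f, h) w DN = (f(h := w), h)"
  "tape_write_move (f, h) w DR = (f(h := w), Suc h)"
  "tape_write_move (f, h) w DL = (f(h := w), h - 1)"
  by (simp_all add: tape_write_move_def)

lemma stay_simps[simp]: "stay ! 0 = DN" "stay ! 1 = DN" "stay ! 2 = DN" "stay ! 3 = DN" "stay ! 4 = DN"
  "length stay = 5" by (simp_all add: stay_def)

lemma tape_write_move_same[simp]: "tape_write_move t (tape_read t) DN = t"
  by (cases t) (simp add: tape_write_move_def tape_read_def)

definition reach :: "(bool list \<Rightarrow> bool list) \<Rightarrow> nat \<times> tape list \<Rightarrow> nat \<times> tape list \<Rightarrow> nat \<Rightarrow> bool" where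
  "reach \<phi> c c' n \<longleftrightarrow> (\<exists>t\<le>n. (otm_step \<phi> id_machine ^^ t) c = c')"

lemma reach_refl: "reach \<phi> c c n" unfolding reach_def by (intro exI[of _ 0]) simp

lemma reach_step: "otm_step \<phi> id_machine c = c' \<Longrightarrow> reach \<phi> c' c'' n \<Longrightarrow> reach \<phi> c c'' (Suc n)"
  unfolding reach_def
proof -
  assume a: "otm_step \<phi> id_machine c = c'" and "\<exists>t\<le>n. (otm_step \<phi> id_machine ^^ t) c' = c''"
  then obtain t where t: "t \<le> n" "(otm_step \<phi> id_machine ^^ t) c' = c''" by blast
  have "(otm_step \<phi> id_machine ^^ Suc t) c = c''" using a t by (simp only: funpow_Suc_right comp_def)
  then show "\<exists>t\<le>Suc n. (otm_step \<phi> id_machine ^^ t) c = c''" using t by (intro exI[of _ "Suc t"]) simp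
qed

lemma reach_trans: "reach \<phi> c c' a \<Longrightarrow> reach \<phi> c' c'' b \<Longrightarrow> reach \<phi> c c'' (a + b)"
  unfolding reach_def
proof -
  assume "\<exists>t\<le>a. (otm_step \<phi> id_machine ^^ t) c = c'" "\<exists>t\<le>b. (otm_step \<phi> id_machine ^^ t) c' = c''"
  then obtain t1 t2 where t: "t1 \<le> a" "(otm_step \<phi> id_machine ^^ t1) c = c'" "t2 \<le> b" "(otm_step \<phi> id_machine ^^ t2) c' = c''" by blast
  have "(otm_step \<phi> id_machine ^^ (t2 + t1)) c = c''" using t by (simp add: funpow_add)
  then show "\<exists>t\<le>a + b. (otm_step \<phi> id_machine ^^ t) c = c''" using t by (intro exI[of _ "t2+t1"]) simp
qed

lemma reach_mono: "reach \<phi> c c' a \<Longrightarrow> a \<le> b \<Longrightarrow> reach \<phi> c c' b"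
  unfolding reach_def using le_trans by blast

lemma reach_trans2: "reach \<phi> c c' a \<Longrightarrow> reach \<phi> c' c'' b \<Longrightarrow> a + b \<le> n \<Longrightarrow> reach \<phi> c c'' n"
  by (rule reach_mono[OF reach_trans])

lemma reach_stepn: "otm_step \<phi> id_machine c = c' \<Longrightarrow> reach \<phi> c' c'' b \<Longrightarrow> Suc b \<le> n \<Longrightarrow> reach \<phi> c c'' n"
  by (rule reach_mono[OF reach_step])

lemma reach_step1: "otm_step \<phi> id_machine c = c' \<Longrightarrow> 1 \<le> n \<Longrightarrow> reach \<phi> c c' n"
  by (rule reach_stepn[OF _ reach_refl[of _ _ 0]]) simp_all

definition word_fun :: "bool list \<Rightarrow> nat \<Rightarrow> bool option" where
  "word_fun w = (\<lambda>p. if p < length w then Some (w ! p) else None)"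

lemma string_tape_word_fun: "string_tape w = (word_fun w, 0)" by (simp add: string_tape_def word_fun_def)

lemma tape_contents_word_fun: "tape_contents (word_fun w, h) = w"
proof -
  have "(LEAST i. word_fun w i = None) = length w"
    by (rule Least_equality) (auto simp: word_fun_def split: if_splits)
  then show ?thesis unfolding tape_contents_def
    by (simp add: word_fun_def) (rule nth_equalityI; simp)
qed

definition counter :: "nat \<Rightarrow> nat \<Rightarrow> bool option" where
  "counter L = (\<lambda>p. if p = 0 then Some False else if p \<le> L then Some True else None)"

declare fun_upd_idem[simp]

lemma word_fun_None[simp]: "length w \<le> p \<Longrightarrow> word_fun w p = None" by (simp add: word_fun_def)

lemma word_fun_True[simp]: "(word_fun w p = Some True) = bit_at w p" by (simp add: word_fun_def bit_at_def)

lemma word_fun_not_None[simp]: "(word_fun w p \<noteq> None) = (p < length w)" by (simp add: word_fun_def)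

lemma word_fun_ex_Some[simp]: "(\<exists>y. word_fun w p = Some y) = (p < length w)" by (simp add: word_fun_def)

lemma counter_0[simp]: "counter L 0 = Some False" by (simp add: counter_def)

lemma counter_Suc[simp]: "counter L (Suc p) = (if Suc p \<le> L then Some True else None)" by (simp add: counter_def)

definition query_tape :: "nat \<Rightarrow> tape" where "query_tape m = (word_fun (nat_code m), m + 2)"

lemma query_tape_Suc: "((word_fun (nat_code m))(m+2 := Some False), Suc (m+2)) = query_tape (Suc m)"
  unfolding query_tape_def by (auto simp: word_fun_def nat_code_eq nth_Cons' nth_append replicate_append_same[symmetric] simp del: replicate_append_same)

lemma counter_upd: "(counter i)(Suc i := Some True) = counter (Suc i)"
  by (auto simp: counter_def)

lemma copy_loop: "i \<le> length a \<Longrightarrow>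
  reach \<phi> (state_code Copy, [(word_fun a, i), t1, t2, t3, (counter i, Suc i)]) (state_code Rew, [(word_fun a, length a), t1, t2, t3, (counter (length a), Suc (length a))]) (length a - i + 1)"
proof (induction "length a - i" arbitrary: i)
  case 0
  then have i: "i = length a" by simp
  show ?case unfolding i
    by (rule reach_step1) (simp_all add: step_id_machine stay_def)
next
  case (Suc n)
  then have il: "i < length a" by simp
  have "otm_step \<phi> id_machine (state_code Copy, [(word_fun a, i), t1, t2, t3, (counter i, Suc i)]) = (state_code Copy, [(word_fun a, Suc i), t1, t2, t3, (counter (Suc i), Suc (Suc i))])"
    using il by (simp add: step_id_machine stay_def counter_upd)
  moreover have "reach \<phi> (state_code Copy, [(word_fun a, Suc i), t1, t2, t3, (counter (Suc i), Suc (Suc i))]) (state_code Rew, [(word_fun a, length a), t1, t2, t3, (counter (length a), Suc (length a))]) (length a - Suc i + 1)"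
    using Suc il by simp
  ultimately show ?case using il reach_step by (metis Suc_diff_Suc add_Suc)
qed

lemma rewind_loop: "reach \<phi> (state_code Rew, [t0, t1, t2, t3, (counter L, p)]) (state_code Query, [t0, t1, t2, t3, (counter L, 0)]) (p + 1)"
proof (induction p)
  case 0
  show ?case by (rule reach_step1) (simp_all add: step_id_machine stay_def)
next
  case (Suc p)
  have "otm_step \<phi> id_machine (state_code Rew, [t0, t1, t2, t3, (counter L, Suc p)]) = (state_code Rew, [t0, t1, t2, t3, (counter L, p)])"
    by (simp add: step_id_machine stay_def)
  then show ?case using Suc reach_step by fastforce
qed

lemma init_phase: "reach \<phi> (state_code Init, [string_tape a, blank_tape, blank_tape, blank_tape, blank_tape])
   (state_code Query, [(word_fun a, length a), query_tape 0, blank_tape, blank_tape, (counter (length a), 0)]) (2 * length a + 5)"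
proof -
  have s1: "otm_step \<phi> id_machine (state_code Init, [string_tape a, blank_tape, blank_tape, blank_tape, blank_tape]) =
     (state_code Init2, [(word_fun a, 0), ((\<lambda>_. None)(0 := Some False), 1), blank_tape, blank_tape, (counter 0, 1)])"
  proof -
    have "(\<lambda>_. None)(0 := Some False) = counter 0" by (auto simp: counter_def fun_eq_iff)
    then show ?thesis by (simp add: step_id_machine stay_def string_tape_word_fun blank_tape_def)
  qed
  have s2: "otm_step \<phi> id_machine (state_code Init2, [(word_fun a, 0), ((\<lambda>_. None)(0 := Some False), 1), blank_tape, blank_tape, (counter 0, 1)]) =
     (state_code Copy, [(word_fun a, 0), query_tape 0, blank_tape, blank_tape, (counter 0, 1)])"
  proof -
    have "word_fun (nat_code 0) = ((\<lambda>_. None)(0 := Some False))(1 := Some True)"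
      by (auto simp: word_fun_def nat_code_eq fun_eq_iff nth_Cons' less_Suc_eq)
    then show ?thesis by (simp add: step_id_machine stay_def query_tape_def)
  qed
  have "reach \<phi> (state_code Copy, [(word_fun a, 0), query_tape 0, blank_tape, blank_tape, (counter 0, 1)])
     (state_code Rew, [(word_fun a, length a), query_tape 0, blank_tape, blank_tape, (counter (length a), Suc (length a))]) (length a + 1)"
    using copy_loop[of 0 a \<phi>] by simp
  moreover have "reach \<phi> (state_code Rew, [(word_fun a, length a), query_tape 0, blank_tape, blank_tape, (counter (length a), Suc (length a))])
     (state_code Query, [(word_fun a, length a), query_tape 0, blank_tape, blank_tape, (counter (length a), 0)]) (Suc (length a) + 1)"
    by (rule rewind_loop)
  ultimately have "reach \<phi> (state_code Copy, [(word_fun a, 0), query_tape 0, blank_tape, blank_tape, (counter 0, 1)])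
     (state_code Query, [(word_fun a, length a), query_tape 0, blank_tape, blank_tape, (counter (length a), 0)]) (2 * length a + 3)"
    by (rule reach_trans2) simp
  then show ?thesis using s1 s2 by (intro reach_stepn[OF s1] reach_stepn[OF s2]) auto
qed

lemma counter_pos[simp]: "0 < p \<Longrightarrow> counter L p = (if p \<le> L then Some True else None)"
  by (cases p) auto

text \<open>
  In the code of \<open>[r \<plusminus> e]\<close>, bit 7 is set iff \<open>e\<close> has an integer part and bit
  \<open>16 b + 3\<close> is fractional bit \<open>b - 1\<close> of \<open>e\<close> (\<open>bit_at_ival_pair\<close>), so the test
  says \<open>e < 2^-(L+3)\<close> (\<open>narrow_code_IFin\<close>); bit 0 is unset only for \<open>[-\<infinity>, \<infinity>]\<close>.
\<close>

definition narrow_code :: "bool list \<Rightarrow> nat \<Rightarrow> bool" where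
  "narrow_code w L \<longleftrightarrow> bit_at w 0 \<and> \<not> bit_at w 7 \<and> (\<forall>b. 1 \<le> b \<and> b \<le> L+3 \<longrightarrow> \<not> bit_at w (16*b+3))"

lemma Test_advance: "k1 \<le> k2 \<Longrightarrow> k2 \<le> 15 \<Longrightarrow> (\<forall>k. k1 \<le> k \<and> k < k2 \<longrightarrow> k \<noteq> 0 \<and> k \<noteq> 7) \<Longrightarrow>
  reach \<phi> (state_code (Test k1), [t0,t1,(f,h),t3,t4]) (state_code (Test k2), [t0,t1,(f,h + (k2-k1)),t3,t4]) (k2 - k1)"
proof (induction "k2 - k1" arbitrary: k1 h)
  case 0 then show ?case using reach_refl by simp
next
  case (Suc n)
  then have k: "k1 < k2" "k1 \<noteq> 0" "k1 \<noteq> 7" "k1 < 15" by auto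
  have s: "otm_step \<phi> id_machine (state_code (Test k1), [t0,t1,(f,h),t3,t4]) = (state_code (Test (Suc k1)), [t0,t1,(f,Suc h),t3,t4])"
    using k by (simp add: step_id_machine stay_def)
  have "reach \<phi> (state_code (Test (Suc k1)), [t0,t1,(f,Suc h),t3,t4]) (state_code (Test k2), [t0,t1,(f,Suc h + (k2-Suc k1)),t3,t4]) (k2 - Suc k1)"
    using Suc k by (intro Suc.hyps) auto
  moreover have eq: "Suc h + (k2 - Suc k1) = h + (k2 - k1)" using k by simp
  ultimately show ?case using k by (intro reach_stepn[OF s]) auto
qed

lemma Scan_advance: "k1 \<le> k2 \<Longrightarrow> k2 \<le> 15 \<Longrightarrow> x \<le> 5 \<Longrightarrow> (\<forall>k. k1 \<le> k \<and> k < k2 \<longrightarrow> k \<noteq> 0 \<and> k \<noteq> 3) \<Longrightarrow>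
  reach \<phi> (state_code (Scan k1 x), [t0,t1,(f,h),t3,t4]) (state_code (Scan k2 x), [t0,t1,(f,h + (k2-k1)),t3,t4]) (k2 - k1)"
proof (induction "k2 - k1" arbitrary: k1 h)
  case 0 then show ?case using reach_refl by simp
next
  case (Suc n)
  then have k: "k1 < k2" "k1 \<noteq> 0" "k1 \<noteq> 3" "k1 < 15" by auto
  have s: "otm_step \<phi> id_machine (state_code (Scan k1 x), [t0,t1,(f,h),t3,t4]) = (state_code (Scan (Suc k1) x), [t0,t1,(f,Suc h),t3,t4])"
    using k Suc.prems by (simp add: step_id_machine stay_def Let_def)
  have "reach \<phi> (state_code (Scan (Suc k1) x), [t0,t1,(f,Suc h),t3,t4]) (state_code (Scan k2 x), [t0,t1,(f,Suc h + (k2-Suc k1)),t3,t4]) (k2 - Suc k1)"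
    using Suc k by (intro Suc.hyps) auto
  moreover have eq: "Suc h + (k2 - Suc k1) = h + (k2 - k1)" using k by simp
  ultimately show ?case using k by (intro reach_stepn[OF s]) auto
qed

lemma Scan_advance': "k1 \<le> k2 \<Longrightarrow> k2 \<le> 15 \<Longrightarrow> x \<le> 5 \<Longrightarrow> (\<forall>k. k1 \<le> k \<and> k < k2 \<longrightarrow> k \<noteq> 0 \<and> k \<noteq> 3) \<Longrightarrow>
  h' = h + (k2 - k1) \<Longrightarrow> n = k2 - k1 \<Longrightarrow>
  reach \<phi> (state_code (Scan k1 x), [t0,t1,(f,h),t3,t4]) (state_code (Scan k2 x), [t0,t1,(f,h'),t3,t4]) n"
  using Scan_advance[of k1 k2 x] by simp

lemma Test_advance': "k1 \<le> k2 \<Longrightarrow> k2 \<le> 15 \<Longrightarrow> (\<forall>k. k1 \<le> k \<and> k < k2 \<longrightarrow> k \<noteq> 0 \<and> k \<noteq> 7) \<Longrightarrow>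
  h' = h + (k2 - k1) \<Longrightarrow> n = k2 - k1 \<Longrightarrow>
  reach \<phi> (state_code (Test k1), [t0,t1,(f,h),t3,t4]) (state_code (Test k2), [t0,t1,(f,h'),t3,t4]) n"
  using Test_advance[of k1 k2] by simp

lemma scan_block_start:
  assumes "1 \<le> b" "b < L+4"
  shows "reach \<phi> (state_code (Scan 0 ((b-1)-L)), [t0,t1,(word_fun w,16*b),t3,(counter L,b)])
    (state_code (Scan 3 (b-L)), [t0,t1,(word_fun w,16*b+3),t3,(counter L,b)]) 3"
proof -
  have s1: "otm_step \<phi> id_machine (state_code (Scan 0 ((b-1)-L)), [t0,t1,(word_fun w,16*b),t3,(counter L,b)])
      = (state_code (Scan 1 (b-L)), [t0,t1,(word_fun w,Suc (16*b)),t3,(counter L,b)])"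
  proof -
    obtain b0 where b0: "b = Suc b0" using assms(1) by (cases b) auto
    show ?thesis using assms(2) unfolding b0 by (simp add: step_id_machine stay_def Let_def; arith)
  qed
  have "reach \<phi> (state_code (Scan 1 (b-L)), [t0,t1,(word_fun w,Suc (16*b)),t3,(counter L,b)])
      (state_code (Scan 3 (b-L)), [t0,t1,(word_fun w,16*b+3),t3,(counter L,b)]) 2"
    by (rule Scan_advance') (use assms(2) in simp_all)
  then show ?thesis by (rule reach_stepn[OF s1]) simp
qed

lemma scan_block_hit:
  assumes "1 \<le> b" "b < L+4" "bit_at w (16*b+3)"
  shows "reach \<phi> (state_code (Scan 0 ((b-1)-L)), [t0,t1,(word_fun w,16*b),t3,(counter L,b)])
    (state_code Inc, [t0,t1,(word_fun w,16*b+3),t3,(counter L,b)]) 4"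
proof -
  have "otm_step \<phi> id_machine (state_code (Scan 3 (b-L)), [t0,t1,(word_fun w,16*b+3),t3,(counter L,b)])
      = (state_code Inc, [t0,t1,(word_fun w,16*b+3),t3,(counter L,b)])"
    using assms by (simp add: step_id_machine stay_def)
  then have "reach \<phi> (state_code (Scan 3 (b-L)), [t0,t1,(word_fun w,16*b+3),t3,(counter L,b)])
      (state_code Inc, [t0,t1,(word_fun w,16*b+3),t3,(counter L,b)]) 1"
    by (rule reach_step1) simp
  then show ?thesis by (rule reach_trans2[OF scan_block_start[OF assms(1,2)]]) simp
qed

lemma scan_block_pass:
  assumes "1 \<le> b" "b < L+4" "\<not> bit_at w (16*b+3)"
  shows "reach \<phi> (state_code (Scan 0 ((b-1)-L)), [t0,t1,(word_fun w,16*b),t3,(counter L,b)])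
    (state_code (Scan 0 ((Suc b-1)-L)), [t0,t1,(word_fun w,16*Suc b),t3,(counter L,Suc b)]) 16"
proof -
  have s3: "otm_step \<phi> id_machine (state_code (Scan 3 (b-L)), [t0,t1,(word_fun w,16*b+3),t3,(counter L,b)])
      = (state_code (Scan 4 (b-L)), [t0,t1,(word_fun w,16*b+4),t3,(counter L,b)])"
    using assms by (simp add: step_id_machine stay_def)
  have r4: "reach \<phi> (state_code (Scan 4 (b-L)), [t0,t1,(word_fun w,16*b+4),t3,(counter L,b)])
      (state_code (Scan 15 (b-L)), [t0,t1,(word_fun w,16*b+15),t3,(counter L,b)]) 11"
    by (rule Scan_advance') (use assms(2) in simp_all)
  have s15: "otm_step \<phi> id_machine (state_code (Scan 15 (b-L)), [t0,t1,(word_fun w,16*b+15),t3,(counter L,b)])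
      = (state_code (Scan 0 ((Suc b-1)-L)), [t0,t1,(word_fun w,16*Suc b),t3,(counter L,Suc b)])"
    using assms(2) by (simp add: step_id_machine stay_def)
  have "reach \<phi> (state_code (Scan 15 (b-L)), [t0,t1,(word_fun w,16*b+15),t3,(counter L,b)])
      (state_code (Scan 0 ((Suc b-1)-L)), [t0,t1,(word_fun w,16*Suc b),t3,(counter L,Suc b)]) 1"
    by (rule reach_step1[OF s15]) simp
  then have "reach \<phi> (state_code (Scan 4 (b-L)), [t0,t1,(word_fun w,16*b+4),t3,(counter L,b)])
      (state_code (Scan 0 ((Suc b-1)-L)), [t0,t1,(word_fun w,16*Suc b),t3,(counter L,Suc b)]) 12"
    by (rule reach_trans2[OF r4]) simp
  then have "reach \<phi> (state_code (Scan 3 (b-L)), [t0,t1,(word_fun w,16*b+3),t3,(counter L,b)])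
      (state_code (Scan 0 ((Suc b-1)-L)), [t0,t1,(word_fun w,16*Suc b),t3,(counter L,Suc b)]) 13"
    by (rule reach_stepn[OF s3]) simp
  then show ?thesis by (rule reach_trans2[OF scan_block_start[OF assms(1,2)]]) simp
qed

lemma scan_loop:
  assumes "1 \<le> b" "b \<le> L+4"
  shows "\<exists>h p. p \<le> L+4 \<and> reach \<phi> (state_code (Scan 0 ((b-1)-L)), [t0,t1,(word_fun w,16*b),t3,(counter L,b)])
    (state_code (if (\<forall>b'. b \<le> b' \<and> b' \<le> L+3 \<longrightarrow> \<not> bit_at w (16*b'+3)) then Flag else Inc), [t0,t1,(word_fun w,h),t3,(counter L,p)]) (16*(L+5-b))"
  using assms
proof (induction "L+4-b" arbitrary: b)
  case 0
  then have b: "b = L+4" by simp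
  have s: "otm_step \<phi> id_machine (state_code (Scan 0 ((b-1)-L)), [t0,t1,(word_fun w,16*b),t3,(counter L,b)]) = (state_code Flag, [t0,t1,(word_fun w,16*b),t3,(counter L,b)])"
    using b by (simp add: step_id_machine stay_def Let_def)
  have e: "(if (\<forall>b'. b \<le> b' \<and> b' \<le> L+3 \<longrightarrow> \<not> bit_at w (16*b'+3)) then Flag else Inc) = Flag" using b by auto
  show ?case unfolding e using b by (intro exI[of _ "16*b"] exI[of _ b] conjI reach_step1[OF s]) auto
next
  case (Suc n)
  have bL: "b < L+4" using Suc by simp
  show ?case
  proof (cases "bit_at w (16*b+3)")
    case True
    then have "(if (\<forall>b'. b \<le> b' \<and> b' \<le> L+3 \<longrightarrow> \<not> bit_at w (16*b'+3)) then Flag else Inc) = Inc"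
      using bL by auto
    moreover have "reach \<phi> (state_code (Scan 0 ((b-1)-L)), [t0,t1,(word_fun w,16*b),t3,(counter L,b)])
        (state_code Inc, [t0,t1,(word_fun w,16*b+3),t3,(counter L,b)]) (16*(L+5-b))"
      by (rule reach_mono[OF scan_block_hit[OF Suc.prems(1) bL True]]) (use bL in simp)
    ultimately show ?thesis using bL by (intro exI[of _ "16*b+3"] exI[of _ b] conjI) simp_all
  next
    case False
    obtain h p where hp: "p \<le> L+4" "reach \<phi> (state_code (Scan 0 ((Suc b-1)-L)), [t0,t1,(word_fun w,16*Suc b),t3,(counter L,Suc b)])
    (state_code (if (\<forall>b'. Suc b \<le> b' \<and> b' \<le> L+3 \<longrightarrow> \<not> bit_at w (16*b'+3)) then Flag else Inc), [t0,t1,(word_fun w,h),t3,(counter L,p)]) (16*(L+5-Suc b))"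
    proof -
      have "n = L + 4 - Suc b" "1 \<le> Suc b" "Suc b \<le> L+4" using Suc.hyps(2) bL by auto
      from Suc.hyps(1)[OF this] show ?thesis using that by blast
    qed
    have eqc: "(\<forall>b'. Suc b \<le> b' \<and> b' \<le> L+3 \<longrightarrow> \<not> bit_at w (16*b'+3)) = (\<forall>b'. b \<le> b' \<and> b' \<le> L+3 \<longrightarrow> \<not> bit_at w (16*b'+3))"
    proof (intro iffI allI impI)
      fix b' assume "\<forall>b'. Suc b \<le> b' \<and> b' \<le> L+3 \<longrightarrow> \<not> bit_at w (16*b'+3)" "b \<le> b' \<and> b' \<le> L+3"
      then show "\<not> bit_at w (16*b'+3)" using False by (cases "b' = b") auto
    qed auto
    have "reach \<phi> (state_code (Scan 0 ((b-1)-L)), [t0,t1,(word_fun w,16*b),t3,(counter L,b)])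
    (state_code (if (\<forall>b'. Suc b \<le> b' \<and> b' \<le> L+3 \<longrightarrow> \<not> bit_at w (16*b'+3)) then Flag else Inc), [t0,t1,(word_fun w,h),t3,(counter L,p)]) (16*(L+5-b))"
      by (rule reach_trans2[OF scan_block_pass[OF Suc.prems(1) bL False] hp(2)]) (use bL in simp)
    then show ?thesis using hp(1) unfolding eqc by blast
  qed
qed

lemma word_fun_nat_code_Suc: "(word_fun (nat_code m))(Suc (Suc m) := Some False) = word_fun (nat_code (Suc m))"
  using query_tape_Suc[of m] by (simp add: query_tape_def)

definition flag_tape :: tape where "flag_tape = ((\<lambda>_. None)(0 := Some True), 0)"

lemma test_header_start:
  "reach \<phi> (state_code Disp, [t0,t1,(word_fun w,0),blank_tape,(counter L,0)])
     (state_code (Test 0), [t0,t1,(word_fun w,0),blank_tape,(counter L,0)]) 1"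
  by (rule reach_step1) (simp_all add: step_id_machine stay_def blank_tape_def)

lemma test_header_reject:
  assumes "\<not> bit_at w 0 \<or> bit_at w 7"
  shows "\<exists>h. reach \<phi> (state_code Disp, [t0,t1,(word_fun w,0),blank_tape,(counter L,0)])
    (state_code Inc, [t0,t1,(word_fun w,h),blank_tape,(counter L,0)]) 9"
proof (cases "bit_at w 0")
  case False
  have "otm_step \<phi> id_machine (state_code (Test 0), [t0,t1,(word_fun w,0),blank_tape,(counter L,0)])
      = (state_code Inc, [t0,t1,(word_fun w,0),blank_tape,(counter L,0)])"
    using False by (simp add: step_id_machine stay_def)
  then have "reach \<phi> (state_code (Test 0), [t0,t1,(word_fun w,0),blank_tape,(counter L,0)])
      (state_code Inc, [t0,t1,(word_fun w,0),blank_tape,(counter L,0)]) 1"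
    by (rule reach_step1) simp
  then have "reach \<phi> (state_code Disp, [t0,t1,(word_fun w,0),blank_tape,(counter L,0)])
      (state_code Inc, [t0,t1,(word_fun w,0),blank_tape,(counter L,0)]) 9"
    by (rule reach_trans2[OF test_header_start]) simp
  then show ?thesis by blast
next
  case True
  with assms have bit7: "bit_at w 7" by simp
  have s0: "otm_step \<phi> id_machine (state_code (Test 0), [t0,t1,(word_fun w,0),blank_tape,(counter L,0)])
      = (state_code (Test 1), [t0,t1,(word_fun w,1),blank_tape,(counter L,0)])"
    using True by (simp add: step_id_machine stay_def)
  have r17: "reach \<phi> (state_code (Test 1), [t0,t1,(word_fun w,1),blank_tape,(counter L,0)])
      (state_code (Test 7), [t0,t1,(word_fun w,7),blank_tape,(counter L,0)]) 6"
    by (rule Test_advance') auto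
  have "otm_step \<phi> id_machine (state_code (Test 7), [t0,t1,(word_fun w,7),blank_tape,(counter L,0)])
      = (state_code Inc, [t0,t1,(word_fun w,7),blank_tape,(counter L,0)])"
    using bit7 by (simp add: step_id_machine stay_def)
  then have "reach \<phi> (state_code (Test 7), [t0,t1,(word_fun w,7),blank_tape,(counter L,0)])
      (state_code Inc, [t0,t1,(word_fun w,7),blank_tape,(counter L,0)]) 1"
    by (rule reach_step1) simp
  then have "reach \<phi> (state_code (Test 1), [t0,t1,(word_fun w,1),blank_tape,(counter L,0)])
      (state_code Inc, [t0,t1,(word_fun w,7),blank_tape,(counter L,0)]) 7"
    by (rule reach_trans2[OF r17]) simp
  then have "reach \<phi> (state_code (Test 0), [t0,t1,(word_fun w,0),blank_tape,(counter L,0)])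
      (state_code Inc, [t0,t1,(word_fun w,7),blank_tape,(counter L,0)]) 8"
    by (rule reach_stepn[OF s0]) simp
  then have "reach \<phi> (state_code Disp, [t0,t1,(word_fun w,0),blank_tape,(counter L,0)])
      (state_code Inc, [t0,t1,(word_fun w,7),blank_tape,(counter L,0)]) 9"
    by (rule reach_trans2[OF test_header_start]) simp
  then show ?thesis by blast
qed

lemma test_header_accept:
  assumes "bit_at w 0" "\<not> bit_at w 7"
  shows "reach \<phi> (state_code Disp, [t0,t1,(word_fun w,0),blank_tape,(counter L,0)])
    (state_code (Scan 0 ((1-1)-L)), [t0,t1,(word_fun w,16*1),blank_tape,(counter L,1)]) 17"
proof -
  have s0: "otm_step \<phi> id_machine (state_code (Test 0), [t0,t1,(word_fun w,0),blank_tape,(counter L,0)])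
      = (state_code (Test 1), [t0,t1,(word_fun w,1),blank_tape,(counter L,0)])"
    using assms(1) by (simp add: step_id_machine stay_def)
  have r17: "reach \<phi> (state_code (Test 1), [t0,t1,(word_fun w,1),blank_tape,(counter L,0)])
      (state_code (Test 7), [t0,t1,(word_fun w,7),blank_tape,(counter L,0)]) 6"
    by (rule Test_advance') auto
  have s7: "otm_step \<phi> id_machine (state_code (Test 7), [t0,t1,(word_fun w,7),blank_tape,(counter L,0)])
      = (state_code (Test 8), [t0,t1,(word_fun w,8),blank_tape,(counter L,0)])"
    using assms(2) by (simp add: step_id_machine stay_def)
  have r815: "reach \<phi> (state_code (Test 8), [t0,t1,(word_fun w,8),blank_tape,(counter L,0)])
      (state_code (Test 15), [t0,t1,(word_fun w,15),blank_tape,(counter L,0)]) 7"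
    by (rule Test_advance') auto
  have s15: "otm_step \<phi> id_machine (state_code (Test 15), [t0,t1,(word_fun w,15),blank_tape,(counter L,0)])
      = (state_code (Scan 0 ((1-1)-L)), [t0,t1,(word_fun w,16*1),blank_tape,(counter L,1)])"
    by (simp add: step_id_machine stay_def)
  have "reach \<phi> (state_code (Test 15), [t0,t1,(word_fun w,15),blank_tape,(counter L,0)])
      (state_code (Scan 0 ((1-1)-L)), [t0,t1,(word_fun w,16*1),blank_tape,(counter L,1)]) 1"
    by (rule reach_step1[OF s15]) simp
  then have "reach \<phi> (state_code (Test 8), [t0,t1,(word_fun w,8),blank_tape,(counter L,0)])
      (state_code (Scan 0 ((1-1)-L)), [t0,t1,(word_fun w,16*1),blank_tape,(counter L,1)]) 8"
    by (rule reach_trans2[OF r815]) simp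
  then have "reach \<phi> (state_code (Test 7), [t0,t1,(word_fun w,7),blank_tape,(counter L,0)])
      (state_code (Scan 0 ((1-1)-L)), [t0,t1,(word_fun w,16*1),blank_tape,(counter L,1)]) 9"
    by (rule reach_stepn[OF s7]) simp
  then have "reach \<phi> (state_code (Test 1), [t0,t1,(word_fun w,1),blank_tape,(counter L,0)])
      (state_code (Scan 0 ((1-1)-L)), [t0,t1,(word_fun w,16*1),blank_tape,(counter L,1)]) 15"
    by (rule reach_trans2[OF r17]) simp
  then have "reach \<phi> (state_code (Test 0), [t0,t1,(word_fun w,0),blank_tape,(counter L,0)])
      (state_code (Scan 0 ((1-1)-L)), [t0,t1,(word_fun w,16*1),blank_tape,(counter L,1)]) 16"
    by (rule reach_stepn[OF s0]) simp
  then show ?thesis by (rule reach_trans2[OF test_header_start]) simp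
qed

lemma test_phase: "\<exists>h p. p \<le> L+4 \<and> reach \<phi> (state_code Disp, [t0,t1,(word_fun w,0),blank_tape,(counter L,0)])
   (state_code (if narrow_code w L then Flag else Inc), [t0,t1,(word_fun w,h),blank_tape,(counter L,p)]) (16*L+100)"
proof (cases "bit_at w 0 \<and> \<not> bit_at w 7")
  case True
  obtain h p where hp: "p \<le> L+4" "reach \<phi> (state_code (Scan 0 ((1-1)-L)), [t0,t1,(word_fun w,16*1),blank_tape,(counter L,1)])
      (state_code (if (\<forall>b'. 1 \<le> b' \<and> b' \<le> L+3 \<longrightarrow> \<not> bit_at w (16*b'+3)) then Flag else Inc), [t0,t1,(word_fun w,h),blank_tape,(counter L,p)]) (16*(L+5-1))"
    using scan_loop[of 1 L \<phi> t0 t1 w blank_tape] by auto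
  have "(if (\<forall>b'. 1 \<le> b' \<and> b' \<le> L+3 \<longrightarrow> \<not> bit_at w (16*b'+3)) then Flag else Inc) = (if narrow_code w L then Flag else Inc)"
    using True by (simp add: narrow_code_def)
  moreover have "reach \<phi> (state_code Disp, [t0,t1,(word_fun w,0),blank_tape,(counter L,0)])
      (state_code (if (\<forall>b'. 1 \<le> b' \<and> b' \<le> L+3 \<longrightarrow> \<not> bit_at w (16*b'+3)) then Flag else Inc), [t0,t1,(word_fun w,h),blank_tape,(counter L,p)]) (16*L+100)"
    using True by (intro reach_trans2[OF test_header_accept hp(2)]) simp_all
  ultimately have "reach \<phi> (state_code Disp, [t0,t1,(word_fun w,0),blank_tape,(counter L,0)])
      (state_code (if narrow_code w L then Flag else Inc), [t0,t1,(word_fun w,h),blank_tape,(counter L,p)]) (16*L+100)"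
    by simp
  then show ?thesis using hp(1) by blast
next
  case False
  then obtain h where "reach \<phi> (state_code Disp, [t0,t1,(word_fun w,0),blank_tape,(counter L,0)])
      (state_code Inc, [t0,t1,(word_fun w,h),blank_tape,(counter L,0)]) 9"
    using test_header_reject by blast
  then have "reach \<phi> (state_code Disp, [t0,t1,(word_fun w,0),blank_tape,(counter L,0)])
      (state_code Inc, [t0,t1,(word_fun w,h),blank_tape,(counter L,0)]) (16*L+100)"
    by (rule reach_mono) simp
  moreover have "\<not> narrow_code w L" using False by (auto simp: narrow_code_def)
  ultimately show ?thesis by (intro exI[of _ h] exI[of _ 0]) simp
qed

lemma query_round: "\<exists>h. reach \<phi> (state_code Query, [t0, query_tape m, t2, blank_tape, (counter L, 0)])
  (state_code Query, [t0, query_tape (if narrow_code (\<phi> (nat_code m)) L then m else Suc m), (word_fun (\<phi> (nat_code m)), h),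
     (if narrow_code (\<phi> (nat_code m)) L then flag_tape else blank_tape), (counter L, 0)]) (17*L + 110)"
proof -
  let ?w = "\<phi> (nat_code m)"
  have sQ: "otm_step \<phi> id_machine (state_code Query, [t0, query_tape m, t2, blank_tape, (counter L, 0)]) = (state_code Disp, [t0, query_tape m, (word_fun ?w, 0), blank_tape, (counter L, 0)])"
    by (simp add: step_query query_tape_def tape_contents_word_fun string_tape_word_fun)
  obtain h p where hp: "p \<le> L+4" "reach \<phi> (state_code Disp, [t0,query_tape m,(word_fun ?w,0),blank_tape,(counter L,0)])
   (state_code (if narrow_code ?w L then Flag else Inc), [t0,query_tape m,(word_fun ?w,h),blank_tape,(counter L,p)]) (16*L+100)"
    using test_phase by blast
  show ?thesis
  proof (cases "narrow_code ?w L")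
    case True
    have sF: "otm_step \<phi> id_machine (state_code Flag, [t0,query_tape m,(word_fun ?w,h),blank_tape,(counter L,p)]) = (state_code Rew, [t0,query_tape m,(word_fun ?w,h),flag_tape,(counter L,p)])"
      by (simp add: step_id_machine stay_def blank_tape_def flag_tape_def)
    have rw: "reach \<phi> (state_code Rew, [t0,query_tape m,(word_fun ?w,h),flag_tape,(counter L,p)]) (state_code Query, [t0,query_tape m,(word_fun ?w,h),flag_tape,(counter L,0)]) (p+1)"
      by (rule rewind_loop)
    have a: "reach \<phi> (state_code Flag, [t0,query_tape m,(word_fun ?w,h),blank_tape,(counter L,p)]) (state_code Query, [t0,query_tape m,(word_fun ?w,h),flag_tape,(counter L,0)]) (p+2)"
      by (rule reach_stepn[OF sF rw]) simp
    have r: "reach \<phi> (state_code Query, [t0, query_tape m, t2, blank_tape, (counter L, 0)]) (state_code Query, [t0,query_tape m,(word_fun ?w,h),flag_tape,(counter L,0)]) (17*L+110)"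
    proof -
      have b: "reach \<phi> (state_code Disp, [t0,query_tape m,(word_fun ?w,0),blank_tape,(counter L,0)]) (state_code Query, [t0,query_tape m,(word_fun ?w,h),flag_tape,(counter L,0)]) (16*L+100 + (p+2))"
        by (rule reach_trans2[OF hp(2)[unfolded if_P[OF True]] a]) simp
      show ?thesis by (rule reach_stepn[OF sQ b]) (use hp(1) in simp)
    qed
    then show ?thesis using True by (intro exI[of _ h]) simp
  next
    case False
    have sI: "otm_step \<phi> id_machine (state_code Inc, [t0,query_tape m,(word_fun ?w,h),blank_tape,(counter L,p)]) = (state_code Rew, [t0,query_tape (Suc m),(word_fun ?w,h),blank_tape,(counter L,p)])"
      by (simp add: step_id_machine stay_def query_tape_def word_fun_nat_code_Suc)
    have rw: "reach \<phi> (state_code Rew, [t0,query_tape (Suc m),(word_fun ?w,h),blank_tape,(counter L,p)]) (state_code Query, [t0,query_tape (Suc m),(word_fun ?w,h),blank_tape,(counter L,0)]) (p+1)"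
      by (rule rewind_loop)
    have a: "reach \<phi> (state_code Inc, [t0,query_tape m,(word_fun ?w,h),blank_tape,(counter L,p)]) (state_code Query, [t0,query_tape (Suc m),(word_fun ?w,h),blank_tape,(counter L,0)]) (p+2)"
      by (rule reach_stepn[OF sI rw]) simp
    have r: "reach \<phi> (state_code Query, [t0, query_tape m, t2, blank_tape, (counter L, 0)]) (state_code Query, [t0,query_tape (Suc m),(word_fun ?w,h),blank_tape,(counter L,0)]) (17*L+110)"
    proof -
      have b: "reach \<phi> (state_code Disp, [t0,query_tape m,(word_fun ?w,0),blank_tape,(counter L,0)]) (state_code Query, [t0,query_tape (Suc m),(word_fun ?w,h),blank_tape,(counter L,0)]) (16*L+100 + (p+2))"
        by (rule reach_trans2[OF hp(2)[unfolded if_not_P[OF False]] a]) simp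
      show ?thesis by (rule reach_stepn[OF sQ b]) (use hp(1) in simp)
    qed
    then show ?thesis using False by (intro exI[of _ h]) simp
  qed
qed

lemma search_phase:
  assumes ok: "narrow_code (\<phi> (nat_code ms)) L" and nok: "\<forall>m<ms. \<not> narrow_code (\<phi> (nat_code m)) L" and "m \<le> ms"
  shows "\<exists>t2'. reach \<phi> (state_code Query, [t0, query_tape m, t2, blank_tape, (counter L,0)]) (state_code Query, [t0, query_tape ms, t2', flag_tape, (counter L,0)]) ((ms - m + 1) * (17*L+110))"
  using assms(3)
proof (induction "ms - m" arbitrary: m t2)
  case 0
  then have m: "m = ms" by simp
  obtain h where h: "reach \<phi> (state_code Query, [t0, query_tape m, t2, blank_tape, (counter L, 0)])
  (state_code Query, [t0, query_tape (if narrow_code (\<phi> (nat_code m)) L then m else Suc m), (word_fun (\<phi> (nat_code m)), h),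
     (if narrow_code (\<phi> (nat_code m)) L then flag_tape else blank_tape), (counter L, 0)]) (17*L + 110)"
    using query_round by blast
  then show ?case using ok unfolding m by (intro exI[of _ "(word_fun (\<phi> (nat_code ms)), h)"]) simp
next
  case (Suc n)
  then have m: "m < ms" by simp
  then have not_narrow: "\<not> narrow_code (\<phi> (nat_code m)) L" using nok by simp
  obtain h where h: "reach \<phi> (state_code Query, [t0, query_tape m, t2, blank_tape, (counter L, 0)])
  (state_code Query, [t0, query_tape (if narrow_code (\<phi> (nat_code m)) L then m else Suc m), (word_fun (\<phi> (nat_code m)), h),
     (if narrow_code (\<phi> (nat_code m)) L then flag_tape else blank_tape), (counter L, 0)]) (17*L + 110)"
    using query_round by blast
  have h': "reach \<phi> (state_code Query, [t0, query_tape m, t2, blank_tape, (counter L, 0)])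
  (state_code Query, [t0, query_tape (Suc m), (word_fun (\<phi> (nat_code m)), h), blank_tape, (counter L, 0)]) (17*L + 110)"
    using h not_narrow by simp
  obtain t2' where t2': "reach \<phi> (state_code Query, [t0, query_tape (Suc m), (word_fun (\<phi> (nat_code m)), h), blank_tape, (counter L,0)]) (state_code Query, [t0, query_tape ms, t2', flag_tape, (counter L,0)]) ((ms - Suc m + 1) * (17*L+110))"
  proof -
    have "n = ms - Suc m" "Suc m \<le> ms" using Suc.hyps(2) m by auto
    from Suc.hyps(1)[OF this, of "(word_fun (\<phi> (nat_code m)), h)"] show ?thesis using that by blast
  qed
  have "reach \<phi> (state_code Query, [t0, query_tape m, t2, blank_tape, (counter L,0)]) (state_code Query, [t0, query_tape ms, t2', flag_tape, (counter L,0)]) ((ms - m + 1) * (17*L+110))"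
  proof (rule reach_trans2[OF h' t2'])
    have "ms - m + 1 = Suc (ms - Suc m + 1)" using m by simp
    then show "17 * L + 110 + (ms - Suc m + 1) * (17 * L + 110) \<le> (ms - m + 1) * (17 * L + 110)" by simp
  qed
  then show ?case by blast
qed

text \<open>
  \<open>out_word w L\<close> rewrites the code \<open>w\<close> of \<open>[r \<plusminus> e]\<close> block by block into the code
  of \<open>[trunc_centre r L \<plusminus> 2^-L]\<close> (\<open>out_word_eq\<close>).
\<close>

definition out_blocks :: "bool list \<Rightarrow> nat \<Rightarrow> nat" where
  "out_blocks w L = (LEAST j. \<not> bit_at w (16*j+5) \<and> L+4 \<le> j)"

definition out_block_bit :: "bool list \<Rightarrow> nat \<Rightarrow> nat \<Rightarrow> nat \<Rightarrow> bool" where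
  "out_block_bit w L j t = out_bit t (bit_at w (16*j+5)) (bit_at w (16*j+9)) (bit_at w (16*j+17)) (j < L) (Suc j < L) (min 5 (Suc j - L))"

definition out_word :: "bool list \<Rightarrow> nat \<Rightarrow> bool list" where
  "out_word w L = [True, bit_at w 1, True, False] @ concat (map (\<lambda>j. map (out_block_bit w L j) [0..<16]) [0..<out_blocks w L])"

lemma out_blocks_exists: "\<exists>j. \<not> bit_at w (16*j+5) \<and> L+4 \<le> j"
  by (rule exI[of _ "L + 4 + length w"]) (auto simp: bit_at_def)

lemma out_blocks_prop: "\<not> bit_at w (16*out_blocks w L+5) \<and> L+4 \<le> out_blocks w L"
  unfolding out_blocks_def by (rule LeastI_ex[OF out_blocks_exists])

lemma out_blocks_minimal: "j < out_blocks w L \<Longrightarrow> \<not> (\<not> bit_at w (16*j+5) \<and> L+4 \<le> j)"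
  unfolding out_blocks_def by (rule not_less_Least)

lemma length_out_word: "length (out_word w L) = 16 * out_blocks w L + 4"
  unfolding out_word_def by (simp add: length_concat_map_const)

lemma nth_out_word: "j < out_blocks w L \<Longrightarrow> t < 16 \<Longrightarrow> out_word w L ! (16*j+4+t) = out_block_bit w L j t"
proof -
  assume a: "j < out_blocks w L" "t < 16"
  have "out_word w L ! (16*j+4+t) = concat (map (\<lambda>j. map (out_block_bit w L j) [0..<16]) [0..<out_blocks w L]) ! (16*j+t)"
    unfolding out_word_def by (simp add: nth_append)
  also have "\<dots> = out_block_bit w L j t" using nth_concat_map[of "\<lambda>j. map (out_block_bit w L j) [0..<16]" 16 j "out_blocks w L" t] a by simp
  finally show ?thesis .
qed

lemma word_fun_take_Suc: "k < length l \<Longrightarrow> (word_fun (take k l))(k := Some (l!k)) = word_fun (take (Suc k) l)"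
  by (auto simp: word_fun_def fun_eq_iff nth_take take_Suc_conv_app_nth nth_append)

lemma Read_advance: "k1 \<le> k2 \<Longrightarrow> k2 \<le> 15 \<Longrightarrow> x \<le> 5 \<Longrightarrow> (\<forall>k. k1 \<le> k \<and> k < k2 \<longrightarrow> k \<noteq> 0 \<and> k \<noteq> 1 \<and> k \<noteq> 5 \<and> k \<noteq> 13) \<Longrightarrow>
  reach \<phi> (state_code (Read k1 P I F a b x), [t0,t1,(f,h),t3,t4]) (state_code (Read k2 P I F a b x), [t0,t1,(f,h + (k2-k1)),t3,t4]) (k2 - k1)"
proof (induction "k2 - k1" arbitrary: k1 h)
  case 0 then show ?case using reach_refl by simp
next
  case (Suc n)
  then have k: "k1 < k2" "k1 \<noteq> 0" "k1 \<noteq> 1" "k1 \<noteq> 5" "k1 \<noteq> 13" "k1 < 15" by auto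
  obtain k' where k': "k1 = Suc k'" using k by (cases k1) auto
  have s: "otm_step \<phi> id_machine (state_code (Read k1 P I F a b x), [t0,t1,(f,h),t3,t4]) = (state_code (Read (Suc k1) P I F a b x), [t0,t1,(f,Suc h),t3,t4])"
    using k Suc.prems unfolding k' by (simp add: step_id_machine stay_def)
  have "reach \<phi> (state_code (Read (Suc k1) P I F a b x), [t0,t1,(f,Suc h),t3,t4]) (state_code (Read k2 P I F a b x), [t0,t1,(f,Suc h + (k2-Suc k1)),t3,t4]) (k2 - Suc k1)"
    using Suc k by (intro Suc.hyps) auto
  moreover have eq: "Suc h + (k2 - Suc k1) = h + (k2 - k1)" using k by simp
  ultimately show ?case using k by (intro reach_stepn[OF s]) auto
qed

lemma Read_advance': "k1 \<le> k2 \<Longrightarrow> k2 \<le> 15 \<Longrightarrow> x \<le> 5 \<Longrightarrow> (\<forall>k. k1 \<le> k \<and> k < k2 \<longrightarrow> k \<noteq> 0 \<and> k \<noteq> 1 \<and> k \<noteq> 5 \<and> k \<noteq> 13) \<Longrightarrow>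
  h' = h + (k2 - k1) \<Longrightarrow> n = k2 - k1 \<Longrightarrow>
  reach \<phi> (state_code (Read k1 P I F a b x), [t0,t1,(f,h),t3,t4]) (state_code (Read k2 P I F a b x), [t0,t1,(f,h'),t3,t4]) n"
  using Read_advance[of k1 k2 x] by simp

lemma read_block:
  fixes j L :: nat
  defines "x \<equiv> min 5 (j - L)" and "x' \<equiv> min 5 (Suc j - L)"
  shows "reach \<phi> (state_code (Read 0 False False False False False x), [t0,t1,(word_fun w,16*j+4),t3,(counter L, Suc j)])
    (state_code (Read 15 (bit_at w (16*j+5)) (bit_at w (16*j+9)) (bit_at w (16*j+17)) (j < L) (Suc j < L) x'),
      [t0,t1,(word_fun w,16*j+19),t3,(counter L, Suc (Suc j))]) 15"
proof -
  let ?P = "bit_at w (16*j+5)" and ?I = "bit_at w (16*j+9)" and ?F = "bit_at w (16*j+17)" and ?a = "j < L" and ?b = "Suc j < L"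
  have x'5: "x' \<le> 5" unfolding x'_def by simp
  have s0: "otm_step \<phi> id_machine (state_code (Read 0 False False False False False x), [t0,t1,(word_fun w,16*j+4),t3,(counter L, Suc j)]) =
     (state_code (Read 1 False False False ?a False x'), [t0,t1,(word_fun w,16*j+5),t3,(counter L, Suc (Suc j))])"
    unfolding x_def x'_def by (simp add: step_id_machine stay_def Let_def) linarith
  have s1: "otm_step \<phi> id_machine (state_code (Read 1 False False False ?a False x'), [t0,t1,(word_fun w,16*j+5),t3,(counter L, Suc (Suc j))]) =
     (state_code (Read 2 ?P False False ?a ?b x'), [t0,t1,(word_fun w,16*j+6),t3,(counter L, Suc (Suc j))])"
    using x'5 by (simp add: step_id_machine stay_def Let_def)
  have r25: "reach \<phi> (state_code (Read 2 ?P False False ?a ?b x'), [t0,t1,(word_fun w,16*j+6),t3,(counter L, Suc (Suc j))])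
     (state_code (Read 5 ?P False False ?a ?b x'), [t0,t1,(word_fun w,16*j+9),t3,(counter L, Suc (Suc j))]) 3"
    by (rule Read_advance') (use x'5 in auto)
  have s5: "otm_step \<phi> id_machine (state_code (Read 5 ?P False False ?a ?b x'), [t0,t1,(word_fun w,16*j+9),t3,(counter L, Suc (Suc j))]) =
     (state_code (Read 6 ?P ?I False ?a ?b x'), [t0,t1,(word_fun w,16*j+10),t3,(counter L, Suc (Suc j))])"
    using x'5 by (simp add: step_id_machine stay_def Let_def)
  have r613: "reach \<phi> (state_code (Read 6 ?P ?I False ?a ?b x'), [t0,t1,(word_fun w,16*j+10),t3,(counter L, Suc (Suc j))])
     (state_code (Read 13 ?P ?I False ?a ?b x'), [t0,t1,(word_fun w,16*j+17),t3,(counter L, Suc (Suc j))]) 7"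
    by (rule Read_advance') (use x'5 in auto)
  have s13: "otm_step \<phi> id_machine (state_code (Read 13 ?P ?I False ?a ?b x'), [t0,t1,(word_fun w,16*j+17),t3,(counter L, Suc (Suc j))]) =
     (state_code (Read 14 ?P ?I ?F ?a ?b x'), [t0,t1,(word_fun w,16*j+18),t3,(counter L, Suc (Suc j))])"
    using x'5 by (simp add: step_id_machine stay_def Let_def)
  have r1415: "reach \<phi> (state_code (Read 14 ?P ?I ?F ?a ?b x'), [t0,t1,(word_fun w,16*j+18),t3,(counter L, Suc (Suc j))])
     (state_code (Read 15 ?P ?I ?F ?a ?b x'), [t0,t1,(word_fun w,16*j+19),t3,(counter L, Suc (Suc j))]) 1"
    by (rule Read_advance') (use x'5 in auto)
  have c1: "reach \<phi> (state_code (Read 13 ?P ?I False ?a ?b x'), [t0,t1,(word_fun w,16*j+17),t3,(counter L, Suc (Suc j))])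
     (state_code (Read 15 ?P ?I ?F ?a ?b x'), [t0,t1,(word_fun w,16*j+19),t3,(counter L, Suc (Suc j))]) 2"
    by (rule reach_stepn[OF s13 r1415]) simp
  have c2: "reach \<phi> (state_code (Read 6 ?P ?I False ?a ?b x'), [t0,t1,(word_fun w,16*j+10),t3,(counter L, Suc (Suc j))])
     (state_code (Read 15 ?P ?I ?F ?a ?b x'), [t0,t1,(word_fun w,16*j+19),t3,(counter L, Suc (Suc j))]) 9"
    by (rule reach_trans2[OF r613 c1]) simp
  have c3: "reach \<phi> (state_code (Read 5 ?P False False ?a ?b x'), [t0,t1,(word_fun w,16*j+9),t3,(counter L, Suc (Suc j))])
     (state_code (Read 15 ?P ?I ?F ?a ?b x'), [t0,t1,(word_fun w,16*j+19),t3,(counter L, Suc (Suc j))]) 10"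
    by (rule reach_stepn[OF s5 c2]) simp
  have c4: "reach \<phi> (state_code (Read 2 ?P False False ?a ?b x'), [t0,t1,(word_fun w,16*j+6),t3,(counter L, Suc (Suc j))])
     (state_code (Read 15 ?P ?I ?F ?a ?b x'), [t0,t1,(word_fun w,16*j+19),t3,(counter L, Suc (Suc j))]) 13"
    by (rule reach_trans2[OF r25 c3]) simp
  have c5: "reach \<phi> (state_code (Read 1 False False False ?a False x'), [t0,t1,(word_fun w,16*j+5),t3,(counter L, Suc (Suc j))])
     (state_code (Read 15 ?P ?I ?F ?a ?b x'), [t0,t1,(word_fun w,16*j+19),t3,(counter L, Suc (Suc j))]) 14"
    by (rule reach_stepn[OF s1 c4]) simp
  show ?thesis by (rule reach_stepn[OF s0 c5]) simp
qed

lemma write_block: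
  assumes "t \<le> 15" "x \<le> 5" "n + 16 \<le> length l" "\<forall>t'<16. l ! (n+t') = out_bit t' P I F a b x"
  shows "reach \<phi> (state_code (Write t P I F a b x), [t0,t1,t2,(word_fun (take (n+t) l), n+t),t4])
     (state_code (Read 0 False False False False False x), [t0,t1,t2,(word_fun (take (n+16) l), n+16),t4]) (16 - t)"
  using assms(1)
proof (induction "15 - t" arbitrary: t)
  case 0
  then have t: "t = 15" by simp
  have "otm_step \<phi> id_machine (state_code (Write t P I F a b x), [t0,t1,t2,(word_fun (take (n+t) l), n+t),t4]) =
    (state_code (Read 0 False False False False False x), [t0,t1,t2,(word_fun (take (n+16) l), n+16),t4])"
  proof -
    have A: "(word_fun (take (n+15) l))(n+15 := Some (l!(n+15))) = word_fun (take (n+16) l)"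
      using word_fun_take_Suc[of "n+15" l] assms(3) by (simp add: eval_nat_numeral)
    have B: "l!(n+15) = out_bit 15 P I F a b x" using assms(4) by simp
    have C: "(word_fun (take (n+15) l))(n+15 := Some (out_bit 15 P I F a b x)) = word_fun (take (n+16) l)"
      using A B by simp
    show ?thesis using assms(2) unfolding t by (simp add: step_id_machine stay_def C)
  qed
  then show ?case unfolding t by (rule reach_step1) simp
next
  case (Suc k)
  then have t: "t < 15" by simp
  have s: "otm_step \<phi> id_machine (state_code (Write t P I F a b x), [t0,t1,t2,(word_fun (take (n+t) l), n+t),t4]) =
    (state_code (Write (Suc t) P I F a b x), [t0,t1,t2,(word_fun (take (n+Suc t) l), n+Suc t),t4])"
  proof -
    have "l ! (n+t) = out_bit t P I F a b x" using assms(4) t by simp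
    moreover have "n + t < length l" using assms(3) t by simp
    ultimately show ?thesis using t assms(2) by (simp add: step_id_machine stay_def word_fun_take_Suc[symmetric])
  qed
  have "reach \<phi> (state_code (Write (Suc t) P I F a b x), [t0,t1,t2,(word_fun (take (n+Suc t) l), n+Suc t),t4])
     (state_code (Read 0 False False False False False x), [t0,t1,t2,(word_fun (take (n+16) l), n+16),t4]) (16 - Suc t)"
    using Suc t by (intro Suc.hyps) auto
  then show ?case by (rule reach_stepn[OF s]) (use t in simp)
qed

lemma output_last_block:
  assumes j: "j = out_blocks w L"
  shows "reach \<phi> (state_code (Read 0 False False False False False (min 5 (j - L))),
      [t0,t1,(word_fun w,16*j+4),(word_fun (take (16*j+4) (out_word w L)), 16*j+4),(counter L, Suc j)])
    (state_code Halt, [t0,t1,(word_fun w,16*j+19),(word_fun (out_word w L), 16*j+4),(counter L, Suc (Suc j))]) 16"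
proof -
  have P: "\<not> bit_at w (16*j+5)" "L + 4 \<le> j" using out_blocks_prop[of w L] j by auto
  have t: "take (16*j+4) (out_word w L) = out_word w L" using j length_out_word by simp
  have "otm_step \<phi> id_machine (state_code (Read 15 (bit_at w (16*j+5)) (bit_at w (16*j+9)) (bit_at w (16*j+17)) (j < L) (Suc j < L) (min 5 (Suc j - L))),
      [t0,t1,(word_fun w,16*j+19),(word_fun (out_word w L), 16*j+4),(counter L, Suc (Suc j))]) =
     (state_code Halt, [t0,t1,(word_fun w,16*j+19),(word_fun (out_word w L), 16*j+4),(counter L, Suc (Suc j))])"
    using P by (simp add: step_id_machine stay_def)
  then have "reach \<phi> (state_code (Read 15 (bit_at w (16*j+5)) (bit_at w (16*j+9)) (bit_at w (16*j+17)) (j < L) (Suc j < L) (min 5 (Suc j - L))),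
      [t0,t1,(word_fun w,16*j+19),(word_fun (out_word w L), 16*j+4),(counter L, Suc (Suc j))])
     (state_code Halt, [t0,t1,(word_fun w,16*j+19),(word_fun (out_word w L), 16*j+4),(counter L, Suc (Suc j))]) 1"
    by (rule reach_step1) simp
  then show ?thesis unfolding t by (rule reach_trans2[OF read_block]) simp
qed

lemma output_block:
  assumes jM: "j < out_blocks w L"
  shows "reach \<phi> (state_code (Read 0 False False False False False (min 5 (j - L))),
      [t0,t1,(word_fun w,16*j+4),(word_fun (take (16*j+4) (out_word w L)), 16*j+4),(counter L, Suc j)])
    (state_code (Read 0 False False False False False (min 5 (Suc j - L))),
      [t0,t1,(word_fun w,16*Suc j+4),(word_fun (take (16*Suc j+4) (out_word w L)), 16*Suc j+4),(counter L, Suc (Suc j))]) 33"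
proof -
  let ?x' = "min 5 (Suc j - L)"
  let ?P = "bit_at w (16*j+5)" and ?I = "bit_at w (16*j+9)" and ?F = "bit_at w (16*j+17)" and ?a = "j < L" and ?b = "Suc j < L"
  let ?ml = "out_word w L"
  have cont: "\<not> (\<not> ?P \<and> 5 \<le> ?x')" using out_blocks_minimal[OF jM] by auto
  have sW: "otm_step \<phi> id_machine (state_code (Read 15 ?P ?I ?F ?a ?b ?x'), [t0,t1,(word_fun w,16*j+19),(word_fun (take (16*j+4) ?ml), 16*j+4),(counter L, Suc (Suc j))]) =
     (state_code (Write 0 ?P ?I ?F ?a ?b ?x'), [t0,t1,(word_fun w,16*j+20),(word_fun (take (16*j+4+0) ?ml), 16*j+4+0),(counter L, Suc (Suc j))])"
    using cont by (simp add: step_id_machine stay_def)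
  have "16 * j + 4 + 16 \<le> length ?ml" using jM length_out_word[of w L] by simp
  moreover have "\<forall>t'<16. ?ml ! (16 * j + 4 + t') = out_bit t' ?P ?I ?F ?a ?b ?x'"
    using nth_out_word[OF jM] by (simp add: out_block_bit_def)
  ultimately have "reach \<phi> (state_code (Write 0 ?P ?I ?F ?a ?b ?x'), [t0,t1,(word_fun w,16*j+20),(word_fun (take (16*j+4+0) ?ml), 16*j+4+0),(counter L, Suc (Suc j))])
     (state_code (Read 0 False False False False False ?x'), [t0,t1,(word_fun w,16*j+20),(word_fun (take (16*j+4+16) ?ml), 16*j+4+16),(counter L, Suc (Suc j))]) (16 - 0)"
    by (intro write_block) simp_all
  moreover have "16*j+4+16 = 16*Suc j+4" "16*j+20 = 16*Suc j+4" by simp_all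
  ultimately have wl: "reach \<phi> (state_code (Write 0 ?P ?I ?F ?a ?b ?x'), [t0,t1,(word_fun w,16*j+20),(word_fun (take (16*j+4+0) ?ml), 16*j+4+0),(counter L, Suc (Suc j))])
     (state_code (Read 0 False False False False False ?x'), [t0,t1,(word_fun w,16*Suc j+4),(word_fun (take (16*Suc j+4) ?ml), 16*Suc j+4),(counter L, Suc (Suc j))]) 16"
    by (simp only: diff_zero)
  have "reach \<phi> (state_code (Read 15 ?P ?I ?F ?a ?b ?x'), [t0,t1,(word_fun w,16*j+19),(word_fun (take (16*j+4) ?ml), 16*j+4),(counter L, Suc (Suc j))])
     (state_code (Read 0 False False False False False ?x'), [t0,t1,(word_fun w,16*Suc j+4),(word_fun (take (16*Suc j+4) ?ml), 16*Suc j+4),(counter L, Suc (Suc j))]) 17"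
    by (rule reach_stepn[OF sW wl]) simp
  then show ?thesis by (rule reach_trans2[OF read_block]) simp
qed

lemma output_loop:
  assumes "j \<le> out_blocks w L"
  shows "\<exists>hh hh' cc. reach \<phi> (state_code (Read 0 False False False False False (min 5 (j - L))),
      [t0,t1,(word_fun w,16*j+4),(word_fun (take (16*j+4) (out_word w L)), 16*j+4),(counter L, Suc j)])
    (state_code Halt, [t0,t1,(word_fun w, hh), (word_fun (out_word w L), hh'), (counter L, cc)]) (33*(out_blocks w L - j) + 16)"
  using assms
proof (induction "out_blocks w L - j" arbitrary: j)
  case 0
  then have j: "j = out_blocks w L" by simp
  show ?case using output_last_block[OF j] j by fastforce
next
  case (Suc n)
  then have jM: "j < out_blocks w L" by simp
  obtain hh hh' cc where "reach \<phi> (state_code (Read 0 False False False False False (min 5 (Suc j - L))),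
      [t0,t1,(word_fun w,16*Suc j+4),(word_fun (take (16*Suc j+4) (out_word w L)), 16*Suc j+4),(counter L, Suc (Suc j))])
    (state_code Halt, [t0,t1,(word_fun w, hh), (word_fun (out_word w L), hh'), (counter L, cc)]) (33*(out_blocks w L - Suc j) + 16)"
  proof -
    have "n = out_blocks w L - Suc j" "Suc j \<le> out_blocks w L" using Suc.hyps(2) jM by auto
    from Suc.hyps(1)[OF this] show ?thesis using that by blast
  qed
  then have "reach \<phi> (state_code (Read 0 False False False False False (min 5 (j - L))),
      [t0,t1,(word_fun w,16*j+4),(word_fun (take (16*j+4) (out_word w L)), 16*j+4),(counter L, Suc j)])
    (state_code Halt, [t0,t1,(word_fun w, hh), (word_fun (out_word w L), hh'), (counter L, cc)]) (33*(out_blocks w L - j) + 16)"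
    by (rule reach_trans2[OF output_block[OF jM]]) (use jM in simp)
  then show ?case by blast
qed

lemma word_fun_out_word_head:
  "((\<lambda>_. None)(0 := Some True, 1 := Some (bit_at w 1), 2 := Some True, 3 := Some False)) =
    word_fun (take 4 (out_word w L))"
proof
  fix p :: nat
  have t4: "take 4 (out_word w L) = [True, bit_at w 1, True, False]" by (simp add: out_word_def)
  consider "p = 0" | "p = 1" | "p = 2" | "p = 3" | "p \<ge> 4" by arith
  then show "((\<lambda>_. None)(0 := Some True, 1 := Some (bit_at w 1), 2 := Some True, 3 := Some False)) p =
      word_fun (take 4 (out_word w L)) p"
    unfolding t4 by cases (simp_all add: word_fun_def)
qed

lemma output_header:
  "reach \<phi> (state_code O0, [t0, t1, (word_fun w, 0), flag_tape, (counter L, 0)])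
    (state_code (Read 0 False False False False False (min 5 (0 - L))),
      [t0, t1, (word_fun w, 16*0+4), (word_fun (take (16*0+4) (out_word w L)), 16*0+4), (counter L, Suc 0)]) 5"
proof -
  let ?f0 = "(\<lambda>_. None)(0 := Some True) :: nat \<Rightarrow> bool option"
  let ?sg = "bit_at w 1"
  have s0: "otm_step \<phi> id_machine (state_code O0, [t0, t1, (word_fun w, 0), flag_tape, (counter L, 0)]) =
      (state_code O1, [t0, t1, (word_fun w, 1), flag_tape, (counter L, 0)])"
    by (simp add: step_id_machine stay_def flag_tape_def)
  have s1: "otm_step \<phi> id_machine (state_code O1, [t0, t1, (word_fun w, 1), flag_tape, (counter L, 0)]) =
      (state_code (if ?sg then O2T else O2F), [t0, t1, (word_fun w, 2), (?f0, 1), (counter L, 0)])"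
    by (simp add: step_id_machine stay_def flag_tape_def)
  have s2: "otm_step \<phi> id_machine (state_code (if ?sg then O2T else O2F), [t0, t1, (word_fun w, 2), (?f0, 1), (counter L, 0)]) =
      (state_code O3, [t0, t1, (word_fun w, 3), (?f0(1 := Some ?sg), 2), (counter L, 0)])"
    by (cases ?sg) (simp_all add: step_id_machine stay_def)
  have s3: "otm_step \<phi> id_machine (state_code O3, [t0, t1, (word_fun w, 3), (?f0(1 := Some ?sg), 2), (counter L, 0)]) =
      (state_code O4, [t0, t1, (word_fun w, 4), (?f0(1 := Some ?sg, 2 := Some True), 3), (counter L, 0)])"
    by (simp add: step_id_machine stay_def)
  have s4: "otm_step \<phi> id_machine (state_code O4, [t0, t1, (word_fun w, 4), (?f0(1 := Some ?sg, 2 := Some True), 3), (counter L, 0)]) =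
      (state_code (Read 0 False False False False False (min 5 (0 - L))),
        [t0, t1, (word_fun w, 16*0+4), (word_fun (take (16*0+4) (out_word w L)), 16*0+4), (counter L, Suc 0)])"
    by (simp add: step_id_machine stay_def word_fun_out_word_head[symmetric])
  let ?R = "(state_code (Read 0 False False False False False (min 5 (0 - L))),
      [t0, t1, (word_fun w, 16*0+4), (word_fun (take (16*0+4) (out_word w L)), 16*0+4), (counter L, Suc 0)])"
  have "reach \<phi> (state_code O4, [t0, t1, (word_fun w, 4), (?f0(1 := Some ?sg, 2 := Some True), 3), (counter L, 0)]) ?R 1"
    by (rule reach_step1[OF s4]) simp
  then have "reach \<phi> (state_code O3, [t0, t1, (word_fun w, 3), (?f0(1 := Some ?sg), 2), (counter L, 0)]) ?R 2"
    by (rule reach_stepn[OF s3]) simp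
  then have "reach \<phi> (state_code (if ?sg then O2T else O2F), [t0, t1, (word_fun w, 2), (?f0, 1), (counter L, 0)]) ?R 3"
    by (rule reach_stepn[OF s2]) simp
  then have "reach \<phi> (state_code O1, [t0, t1, (word_fun w, 1), flag_tape, (counter L, 0)]) ?R 4"
    by (rule reach_stepn[OF s1]) simp
  then show ?thesis by (rule reach_stepn[OF s0]) simp
qed

lemma output_phase:
  fixes \<phi> :: "bool list \<Rightarrow> bool list" and ms :: nat
  defines "w \<equiv> \<phi> (nat_code ms)"
  shows "\<exists>hh hh' cc. reach \<phi> (state_code Query, [ua, query_tape ms, ub, flag_tape, (counter L, 0)])
     (state_code Halt, [ua, query_tape ms, (word_fun w, hh), (word_fun (out_word w L), hh'), (counter L, cc)]) (33 * out_blocks w L + 30)"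
proof -
  have sQ: "otm_step \<phi> id_machine (state_code Query, [ua, query_tape ms, ub, flag_tape, (counter L, 0)]) =
      (state_code Disp, [ua, query_tape ms, (word_fun w, 0), flag_tape, (counter L, 0)])"
    unfolding w_def by (simp add: step_query query_tape_def tape_contents_word_fun string_tape_word_fun)
  have sD: "otm_step \<phi> id_machine (state_code Disp, [ua, query_tape ms, (word_fun w, 0), flag_tape, (counter L, 0)]) =
      (state_code O0, [ua, query_tape ms, (word_fun w, 0), flag_tape, (counter L, 0)])"
    by (simp add: step_id_machine stay_def flag_tape_def)
  obtain hh hh' cc where "reach \<phi> (state_code (Read 0 False False False False False (min 5 (0 - L))),
      [ua, query_tape ms, (word_fun w, 16*0+4), (word_fun (take (16*0+4) (out_word w L)), 16*0+4), (counter L, Suc 0)])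
    (state_code Halt, [ua, query_tape ms, (word_fun w, hh), (word_fun (out_word w L), hh'), (counter L, cc)])
    (33*(out_blocks w L - 0) + 16)"
    using output_loop[of 0 w L \<phi> ua "query_tape ms"] by auto
  then have "reach \<phi> (state_code O0, [ua, query_tape ms, (word_fun w, 0), flag_tape, (counter L, 0)])
    (state_code Halt, [ua, query_tape ms, (word_fun w, hh), (word_fun (out_word w L), hh'), (counter L, cc)])
    (33 * out_blocks w L + 21)"
    by (rule reach_trans2[OF output_header]) simp
  then have "reach \<phi> (state_code Disp, [ua, query_tape ms, (word_fun w, 0), flag_tape, (counter L, 0)])
    (state_code Halt, [ua, query_tape ms, (word_fun w, hh), (word_fun (out_word w L), hh'), (counter L, cc)])
    (33 * out_blocks w L + 22)"
    by (rule reach_stepn[OF sD]) simp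
  then have "reach \<phi> (state_code Query, [ua, query_tape ms, ub, flag_tape, (counter L, 0)])
    (state_code Halt, [ua, query_tape ms, (word_fun w, hh), (word_fun (out_word w L), hh'), (counter L, cc)])
    (33 * out_blocks w L + 30)"
    by (rule reach_stepn[OF sQ]) simp
  then show ?thesis by blast
qed

definition first_narrow :: "(bool list \<Rightarrow> bool list) \<Rightarrow> nat \<Rightarrow> nat" where
  "first_narrow \<phi> L = (LEAST m. narrow_code (\<phi> (nat_code m)) L)"

lemma funpow_step_halted: "fst ((otm_step \<phi> M ^^ t) c) = 1 \<Longrightarrow> (otm_step \<phi> M ^^ (t + d)) c = (otm_step \<phi> M ^^ t) c"
proof (induction d)
  case 0 then show ?case by simp
next
  case (Suc d)
  have "(otm_step \<phi> M ^^ (t + Suc d)) c = otm_step \<phi> M ((otm_step \<phi> M ^^ (t + d)) c)" by simp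
  also have "\<dots> = otm_step \<phi> M ((otm_step \<phi> M ^^ t) c)" using Suc by simp
  also have "\<dots> = (otm_step \<phi> M ^^ t) c"
  proof -
    obtain q ts where e: "(otm_step \<phi> M ^^ t) c = (q, ts)" by fastforce
    have "q = 1" using Suc.prems e by simp
    then show ?thesis using e by (simp add: otm_step_def Let_def)
  qed
  finally show ?case .
qed

lemma id_machine_run:
  fixes a :: "bool list" and \<phi> :: "bool list \<Rightarrow> bool list"
  defines "L \<equiv> length a"
  defines "ms \<equiv> first_narrow \<phi> L"
  defines "w \<equiv> \<phi> (nat_code ms)"
  assumes ex: "\<exists>m. narrow_code (\<phi> (nat_code m)) L"
  shows "otm_halts_within \<phi> id_machine a (otm_time \<phi> id_machine a)"
    "otm_time \<phi> id_machine a \<le> 2*L+5 + (ms+1)*(17*L+110) + (33 * out_blocks w L + 30)"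
    "otm_out \<phi> id_machine a = out_word w L"
proof -
  have ok: "narrow_code (\<phi> (nat_code ms)) L" unfolding ms_def first_narrow_def by (rule LeastI_ex[OF ex])
  have nok: "\<forall>m<ms. \<not> narrow_code (\<phi> (nat_code m)) L" unfolding ms_def first_narrow_def using not_less_Least by blast
  let ?t0 = "(word_fun a, L)"
  have r1: "reach \<phi> (state_code Init, [string_tape a, blank_tape, blank_tape, blank_tape, blank_tape])
   (state_code Query, [?t0, query_tape 0, blank_tape, blank_tape, (counter L, 0)]) (2 * L + 5)"
    unfolding L_def by (rule init_phase)
  obtain t2' where r2: "reach \<phi> (state_code Query, [?t0, query_tape 0, blank_tape, blank_tape, (counter L,0)]) (state_code Query, [?t0, query_tape ms, t2', flag_tape, (counter L,0)]) ((ms - 0 + 1) * (17*L+110))"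
    using search_phase[OF ok nok, of 0 ?t0 blank_tape] by auto
  obtain hh hh' cc where r3: "reach \<phi> (state_code Query, [?t0, query_tape ms, t2', flag_tape, (counter L, 0)])
     (state_code Halt, [?t0, query_tape ms, (word_fun w, hh), (word_fun (out_word w L), hh'), (counter L, cc)]) (33 * out_blocks w L + 30)"
    using output_phase[where \<phi>=\<phi> and ms=ms and ua="?t0" and ub=t2' and L=L] unfolding w_def by blast
  let ?H = "(state_code Halt, [?t0, query_tape ms, (word_fun w, hh), (word_fun (out_word w L), hh'), (counter L, cc)])"
  have init: "otm_init id_machine a = (state_code Init, [string_tape a, blank_tape, blank_tape, blank_tape, blank_tape])"
    by (simp add: otm_init_def id_machine_def state_code.simps numeral_eq_Suc)
  have "reach \<phi> (otm_init id_machine a) ?H (2*L+5 + (ms+1)*(17*L+110) + (33 * out_blocks w L + 30))"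
    unfolding init by (rule reach_trans2[OF reach_trans2[OF r1 r2 order_refl] r3]) simp
  then obtain t where t: "t \<le> 2*L+5 + (ms+1)*(17*L+110) + (33 * out_blocks w L + 30)" "otm_run \<phi> id_machine a t = ?H"
    unfolding reach_def otm_run_def by blast
  have hw: "otm_halts_within \<phi> id_machine a t" using t(2) by (simp add: otm_halts_within_def state_code.simps)
  then have hT: "otm_halts_within \<phi> id_machine a (otm_time \<phi> id_machine a)" unfolding otm_time_def by (rule LeastI)
  then show "otm_halts_within \<phi> id_machine a (otm_time \<phi> id_machine a)" .
  have le: "otm_time \<phi> id_machine a \<le> t" unfolding otm_time_def using hw by (rule Least_le)
  then show "otm_time \<phi> id_machine a \<le> 2*L+5 + (ms+1)*(17*L+110) + (33 * out_blocks w L + 30)" using t(1) by simp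
  have "otm_run \<phi> id_machine a t = otm_run \<phi> id_machine a (otm_time \<phi> id_machine a + (t - otm_time \<phi> id_machine a))" using le by simp
  also have "\<dots> = otm_run \<phi> id_machine a (otm_time \<phi> id_machine a)" unfolding otm_run_def
    by (rule funpow_step_halted) (use hT in \<open>simp add: otm_halts_within_def otm_run_def\<close>)
  finally have "otm_run \<phi> id_machine a (otm_time \<phi> id_machine a) = ?H" using t(2) by simp
  then show "otm_out \<phi> id_machine a = out_word w L" by (simp add: otm_out_def tape_contents_word_fun)
qed

lemma bit_at_pair_code_4: "u < 4 \<Longrightarrow> bit_at (pair_code A B) (4*i+u) = [i < length A, bit_at A i, i < length B, bit_at B i] ! u"
  using bit_at_pair_code[of A B i] by (cases u; cases "u - 1"; cases "u - 2"; auto simp: numeral_eq_Suc)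

lemma less_16_cases: "(t::nat) < 16 \<Longrightarrow> t = 0 \<or> t = 1 \<or> t = 2 \<or> t = 3 \<or> t = 4 \<or> t = 5 \<or> t = 6 \<or> t = 7 \<or>
   t = 8 \<or> t = 9 \<or> t = 10 \<or> t = 11 \<or> t = 12 \<or> t = 13 \<or> t = 14 \<or> t = 15" by arith

lemma bit_at_ival_pair:
  assumes "t < 16"
  shows "bit_at (pair_code (s1 # pair_code A B) (s2 # pair_code C D)) (16*j+4+t) =
    [j < length A \<or> j < length B, j < length A, j < length C \<or> j < length D, j < length C,
     j < length A \<or> j < length B, bit_at A j, j < length C \<or> j < length D, bit_at C j,
     j < length A \<or> j < length B, j < length B, j < length C \<or> j < length D, j < length D,
     j < length A \<or> j < length B, bit_at B j, j < length C \<or> j < length D, bit_at D j] ! t"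
proof -
  define tt where "tt = t div 4"
  define u where "u = t mod 4"
  have tt4: "tt < 4" "u < 4" using assms unfolding tt_def u_def by auto
  have e: "16*j+4+t = 4*Suc(4*j + tt) + u" unfolding tt_def u_def by simp
  have lt: "\<And>m. (4*j+tt < 4*m) = (j < m)" using tt4 by auto
  have "bit_at (pair_code (s1 # pair_code A B) (s2 # pair_code C D)) (16*j+4+t) =
    [j < length A \<or> j < length B, [j < length A, bit_at A j, j < length B, bit_at B j] ! tt,
     j < length C \<or> j < length D, [j < length C, bit_at C j, j < length D, bit_at D j] ! tt] ! u"
    unfolding e
    by (subst bit_at_pair_code_4[OF tt4(2)]) (simp add: length_pair_code lt bit_at_pair_code_4[OF tt4(1)] less_max_iff_disj)
  also have "\<dots> = [j < length A \<or> j < length B, j < length A, j < length C \<or> j < length D, j < length C,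
     j < length A \<or> j < length B, bit_at A j, j < length C \<or> j < length D, bit_at C j,
     j < length A \<or> j < length B, j < length B, j < length C \<or> j < length D, j < length D,
     j < length A \<or> j < length B, bit_at B j, j < length C \<or> j < length D, bit_at D j] ! t"
    using less_16_cases[OF assms] unfolding tt_def u_def by (elim disjE) simp_all
  finally show ?thesis .
qed

lemma ival_code_IFin: "ival_code (IFin r e) = pair_code ((r < 0) # pair_code (int_bits r) (frac_part_bits r)) ((e < 0) # pair_code (int_bits e) (frac_part_bits e))"
  by (simp add: ival_code_def dyadic_code_eq)

lemma not_narrow_code_IWhole: "\<not> narrow_code (ival_code IWhole) L"
  by (simp add: narrow_code_def ival_code_def bit_at_def)

lemma bit_at_ival_pair_fields:
  "bit_at (pair_code (s1 # pair_code A B) (s2 # pair_code C D)) (16*j+5) = (j < length A)"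
  "bit_at (pair_code (s1 # pair_code A B) (s2 # pair_code C D)) (16*j+9) = bit_at A j"
  "bit_at (pair_code (s1 # pair_code A B) (s2 # pair_code C D)) (16*j+17) = bit_at B j"
  "bit_at (pair_code (s1 # pair_code A B) (s2 # pair_code C D)) (16*j+19) = bit_at D j"
  using bit_at_ival_pair[of 1 s1 A B s2 C D j] bit_at_ival_pair[of 5 s1 A B s2 C D j]
    bit_at_ival_pair[of 13 s1 A B s2 C D j] bit_at_ival_pair[of 15 s1 A B s2 C D j]
  by (simp_all add: add.commute)

lemma bit_at_pair_Cons_head:
  "bit_at (pair_code (s1 # X) (s2 # Y)) 0"
  "bit_at (pair_code (s1 # X) (s2 # Y)) 1 = s1"
  "bit_at (pair_code (s1 # X) (s2 # Y)) 2"
  "bit_at (pair_code (s1 # X) (s2 # Y)) 3 = s2"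
  using bit_at_pair_code[of "s1 # X" "s2 # Y" 0] by (simp_all add: numeral_eq_Suc)

lemma bit_at_pair_Cons_7: "bit_at (pair_code (s1 # X) (s2 # pair_code C D)) 7 = (0 < length C)"
  using bit_at_pair_code(4)[of "s1 # X" "s2 # pair_code C D" 1] bit_at_pair_code(1)[of C D 0]
  by (simp add: numeral_eq_Suc)

lemma narrow_code_IFin:
  assumes "ival_valid (IFin r e)"
  shows "narrow_code (ival_code (IFin r e)) L \<longleftrightarrow> e < 1 / 2^(L+3)"
proof -
  have e0: "0 \<le> e" "dyadic e" using assms by (auto simp: ival_valid_def)
  have "narrow_code (ival_code (IFin r e)) L \<longleftrightarrow> int_bits e = [] \<and> (\<forall>j<L+3. \<not> bit_at (frac_part_bits e) j)"
  proof -
    have b: "bit_at (ival_code (IFin r e)) (16*b+3) = bit_at (frac_part_bits e) (b - 1)" if "1 \<le> b" for b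
    proof -
      have "16*b+3 = 16*(b-1)+19" using that by simp
      then show ?thesis unfolding ival_code_IFin by (simp only: bit_at_ival_pair_fields(4))
    qed
    have "(\<forall>b. 1 \<le> b \<and> b \<le> L+3 \<longrightarrow> \<not> bit_at (ival_code (IFin r e)) (16*b+3)) \<longleftrightarrow> (\<forall>j<L+3. \<not> bit_at (frac_part_bits e) j)"
    proof
      assume A: "\<forall>b. 1 \<le> b \<and> b \<le> L+3 \<longrightarrow> \<not> bit_at (ival_code (IFin r e)) (16*b+3)"
      show "\<forall>j<L+3. \<not> bit_at (frac_part_bits e) j"
      proof (intro allI impI)
        fix j assume "j < L+3"
        then show "\<not> bit_at (frac_part_bits e) j" using A[rule_format, of "Suc j"] b[of "Suc j"] by simp
      qed
    next
      assume A: "\<forall>j<L+3. \<not> bit_at (frac_part_bits e) j"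
      show "\<forall>b. 1 \<le> b \<and> b \<le> L+3 \<longrightarrow> \<not> bit_at (ival_code (IFin r e)) (16*b+3)"
        using A b by auto
    qed
    then show ?thesis unfolding narrow_code_def by (simp add: ival_code_IFin bit_at_pair_Cons_head bit_at_pair_Cons_7)
  qed
  also have "\<dots> \<longleftrightarrow> e < 1 / 2^(L+3)"
    using dyadic_less_inverse_power2_iff[OF e0] by blast
  finally show ?thesis .
qed

lemma narrow_code_if_diam_le:
  assumes "ival_valid J" "ival_diam_le J (1 / 2^(L+4))"
  shows "narrow_code (ival_code J) L"
proof -
  obtain r e where J: "J = IFin r e" "2 * e \<le> 1 / 2^(L+4)"
    using assms(2) by (cases J) (auto simp: ival_diam_le_def)
  have "0 \<le> e" using assms(1) J by (simp add: ival_valid_def)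
  moreover have "(1::real) / 2^(L+3) = 2 * (1 / 2^(L+4))" by (simp add: eval_nat_numeral)
  moreover have "(0::real) < 1 / 2^(L+4)" by simp
  ultimately have "e < 1 / 2^(L+3)" using J(2) by linarith
  then show ?thesis using narrow_code_IFin assms(1) J by simp
qed

lemma out_blocks_IFin: "out_blocks (ival_code (IFin r e)) L = max (length (int_bits r)) (L+4)"
  unfolding out_blocks_def ival_code_IFin bit_at_ival_pair_fields(1) by (rule Least_equality) auto

text \<open>
  The first \<open>L + 3\<close> fractional bits of \<open>r\<close> followed by a 1: this expansion has
  no trailing zeros, so it is the one used by \<open>dyadic_code\<close>, and its value is
  within \<open>2^-(L+4)\<close> of the fractional part of \<open>r\<close> (\<open>trunc_centre_approx\<close>).
\<close>

definition trunc_frac_bits :: "real \<Rightarrow> nat \<Rightarrow> bool list" where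
  "trunc_frac_bits r L = map (bit_at (frac_part_bits r)) [0..<L+3] @ [True]"

definition radius_frac_bits :: "nat \<Rightarrow> bool list" where
  "radius_frac_bits L = replicate (L - 1) False @ [True]"

definition trunc_centre :: "real \<Rightarrow> nat \<Rightarrow> real" where
  "trunc_centre r L = (if r < 0 then -1 else 1) * (real (nat \<lfloor>\<bar>r\<bar>\<rfloor>) + frac_val (trunc_frac_bits r L))"

lemma length_trunc_frac_bits[simp]: "length (trunc_frac_bits r L) = L + 4" by (simp add: trunc_frac_bits_def)

lemma bit_at_trunc_frac_bits: "bit_at (trunc_frac_bits r L) j = ((j < L+3 \<and> bit_at (frac_part_bits r) j) \<or> j = L+3)"
  by (auto simp: trunc_frac_bits_def bit_at_def nth_append)

lemma length_radius_frac_bits[simp]: "1 \<le> L \<Longrightarrow> length (radius_frac_bits L) = L" by (simp add: radius_frac_bits_def)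

lemma bit_at_radius_frac_bits: "1 \<le> L \<Longrightarrow> bit_at (radius_frac_bits L) j = (j = L - 1)"
  by (auto simp: radius_frac_bits_def bit_at_def nth_append)

lemma frac_val_trunc_frac_bits_pos: "0 < frac_val (trunc_frac_bits r L)"
proof -
  have "bit_at (trunc_frac_bits r L) (L+3)" by (simp add: bit_at_trunc_frac_bits)
  then have "frac_val (trunc_frac_bits r L) \<ge> 1 / 2^Suc (L+3)" by (rule frac_val_ge_bit)
  moreover have "(0::real) < 1 / 2^Suc (L+3)" by simp
  ultimately show ?thesis by linarith
qed

lemma dyadic_code_trunc_centre: "dyadic_code (trunc_centre r L) = (r < 0) # pair_code (int_bits r) (trunc_frac_bits r L)"
proof -
  let ?I = "nat \<lfloor>\<bar>r\<bar>\<rfloor>" and ?F = "frac_val (trunc_frac_bits r L)"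
  have F: "0 < ?F" "?F < 1" using frac_val_trunc_frac_bits_pos frac_val_less_1 by auto
  have ac: "\<bar>trunc_centre r L\<bar> = real ?I + ?F" unfolding trunc_centre_def using F by (auto simp: abs_mult)
  define S where "S = real ?I + ?F"
  have Spos: "0 < S" unfolding S_def using F(1) by (metis add_nonneg_pos of_nat_0_le_iff)
  have cS: "trunc_centre r L = (if r < 0 then - S else S)" by (simp add: trunc_centre_def S_def)
  have neg: "(trunc_centre r L < 0) = (r < 0)" unfolding cS using Spos by simp
  have fl: "\<lfloor>\<bar>trunc_centre r L\<bar>\<rfloor> = int ?I" unfolding ac using F by (simp add: floor_eq_iff)
  have last: "trunc_frac_bits r L = [] \<or> last (trunc_frac_bits r L)" by (simp add: trunc_frac_bits_def)
  have fr: "\<bar>trunc_centre r L\<bar> - of_int \<lfloor>\<bar>trunc_centre r L\<bar>\<rfloor> = ?F" using ac fl by simp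
  show ?thesis unfolding dyadic_code_eq neg fr frac_bits_frac_val[OF last] using fl by simp
qed

lemma frac_val_radius_frac_bits: "1 \<le> L \<Longrightarrow> frac_val (radius_frac_bits L) = 1 / 2^L"
proof -
  assume L: "1 \<le> L"
  have "frac_val (radius_frac_bits L) = frac_val [True] / 2 ^ (L - 1)" unfolding radius_frac_bits_def frac_val_append by simp
  also have "\<dots> = 1 / (2 * 2 ^ (L - 1))" by (simp add: frac_val_def)
  also have "2 * 2 ^ (L - 1) = (2::real) ^ L" using L by (metis Suc_diff_le diff_Suc_1 power_Suc)
  finally show ?thesis by simp
qed

lemma dyadic_code_radius: "1 \<le> L \<Longrightarrow> dyadic_code (1 / 2^L) = False # pair_code [] (radius_frac_bits L)"
proof -
  assume L: "1 \<le> L"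
  have o: "(1::real) < 2^L" using L by (intro one_less_power) auto
  have p1: "(0::real) < 1 / 2^L" by simp
  have p2: "1 / 2^L < (1::real)" using o by (simp add: field_simps)
  note p = p1 p2
  then have fl: "\<lfloor>\<bar>1 / (2::real)^L\<bar>\<rfloor> = (0::int)" by (simp add: floor_eq_iff)
  have last: "radius_frac_bits L = [] \<or> last (radius_frac_bits L)" by (simp add: radius_frac_bits_def)
  have "frac_bits (1 / 2^L) = radius_frac_bits L" using frac_bits_frac_val[OF last] frac_val_radius_frac_bits[OF L] by simp
  then show ?thesis unfolding dyadic_code_eq using p fl by simp
qed

lemma bit_at_Nil: "bit_at [] j = False" by (simp add: bit_at_def)

lemma ival_code_trunc_centre:
  assumes "1 \<le> L"
  shows "ival_code (IFin (trunc_centre r L) (1/2^L)) =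
    pair_code ((r < 0) # pair_code (int_bits r) (trunc_frac_bits r L)) (False # pair_code [] (radius_frac_bits L))"
  by (simp add: ival_code_def dyadic_code_trunc_centre dyadic_code_radius[OF assms])

lemma length_out_word_IFin:
  "length (out_word (ival_code (IFin r e)) L) = 16 * max (length (int_bits r)) (L+4) + 4"
  using length_out_word out_blocks_IFin by simp

lemma bit_at_out_word_head:
  assumes "1 \<le> L" "p < 4"
  shows "bit_at (out_word (ival_code (IFin r e)) L) p = bit_at (ival_code (IFin (trunc_centre r L) (1/2^L))) p"
proof -
  have p4: "p = 0 \<or> p = 1 \<or> p = 2 \<or> p = 3" using assms(2) by arith
  have "bit_at (out_word (ival_code (IFin r e)) L) p = [True, bit_at (ival_code (IFin r e)) 1, True, False] ! p"
    using p4 length_out_word_IFin[of r e L] by (elim disjE) (simp_all add: bit_at_def out_word_def)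
  also have "\<dots> = [True, r < 0, True, False] ! p" unfolding ival_code_IFin bit_at_pair_Cons_head(2) ..
  also have "\<dots> = bit_at (ival_code (IFin (trunc_centre r L) (1/2^L))) p"
    unfolding ival_code_trunc_centre[OF assms(1)]
    using p4 by (elim disjE; hypsubst; simp only: bit_at_pair_Cons_head; simp)
  finally show ?thesis .
qed

lemma bit_at_out_word_block:
  assumes L: "1 \<le> L" and t16: "t < 16" and jM: "j < max (length (int_bits r)) (L+4)"
  shows "bit_at (out_word (ival_code (IFin r e)) L) (16*j+4+t) = bit_at (ival_code (IFin (trunc_centre r L) (1/2^L))) (16*j+4+t)"
proof -
  let ?w = "ival_code (IFin r e)"
  have "16*j+t < 16 * Suc j" using t16 by simp
  also have "16 * Suc j \<le> 16 * max (length (int_bits r)) (L+4)" using jM by (intro mult_le_mono2) simp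
  finally have lt: "16*j + t < 16 * max (length (int_bits r)) (L+4)" .
  have "bit_at (out_word ?w L) (16*j+4+t) = out_block_bit ?w L j t"
    using nth_out_word[OF _ t16, of j ?w L] jM lt length_out_word_IFin[of r e L]
    by (simp add: bit_at_def out_blocks_IFin)
  also have "\<dots> = out_bit t (j < length (int_bits r)) (bit_at (int_bits r) j) (bit_at (frac_part_bits r) j) (j < L) (Suc j < L) (min 5 (Suc j - L))"
    unfolding out_block_bit_def ival_code_IFin bit_at_ival_pair_fields(1-3) ..
  also have "\<dots> = bit_at (ival_code (IFin (trunc_centre r L) (1/2^L))) (16*j+4+t)"
    unfolding ival_code_trunc_centre[OF L] bit_at_ival_pair[OF t16] out_bit_def
    using less_16_cases[OF t16] L
    by (elim disjE) (auto simp: bit_at_trunc_frac_bits bit_at_radius_frac_bits bit_at_Nil)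
  finally show ?thesis .
qed

lemma out_word_eq:
  assumes L: "1 \<le> L"
  shows "out_word (ival_code (IFin r e)) L = ival_code (IFin (trunc_centre r L) (1/2^L))"
proof (rule list_eq_by_bit_at)
  let ?M = "max (length (int_bits r)) (L+4)"
  have lR: "length (ival_code (IFin (trunc_centre r L) (1/2^L))) = 16 * ?M + 4"
    unfolding ival_code_trunc_centre[OF L] using L by (simp add: length_pair_code)
  then show "i < length (out_word (ival_code (IFin r e)) L) \<longleftrightarrow> i < length (ival_code (IFin (trunc_centre r L) (1/2^L)))" for i
    by (simp add: length_out_word_IFin)
  fix p
  show "bit_at (out_word (ival_code (IFin r e)) L) p = bit_at (ival_code (IFin (trunc_centre r L) (1/2^L))) p"
  proof (cases "p < 4")
    case True
    then show ?thesis by (rule bit_at_out_word_head[OF L])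
  next
    case False
    define j where "j = (p - 4) div 16"
    define t where "t = (p - 4) mod 16"
    have p: "p = 16*j+4+t" unfolding j_def t_def using False by simp
    show ?thesis
    proof (cases "j < ?M")
      case True
      then show ?thesis unfolding p by (intro bit_at_out_word_block[OF L]) (simp_all add: t_def)
    next
      case False
      then have "length (out_word (ival_code (IFin r e)) L) \<le> p" "length (ival_code (IFin (trunc_centre r L) (1/2^L))) \<le> p"
        using lR p by (auto simp: length_out_word_IFin)
      then show ?thesis by (simp add: bit_at_def)
    qed
  qed
qed

lemma dyadic_trunc_centre: "dyadic (trunc_centre r L)"
proof -
  let ?I = "nat \<lfloor>\<bar>r\<bar>\<rfloor>" and ?b = "bin_val (trunc_frac_bits r L)" and ?s = "(if r < 0 then -1 else 1) :: int"
  have f: "frac_val (trunc_frac_bits r L) = real ?b / 2^(L+4)" using bin_val_frac_val[of "trunc_frac_bits r L"] by simp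
  have "trunc_centre r L = of_int (?s * (int ?I * 2^(L+4) + int ?b)) / 2^(L+4)"
    unfolding trunc_centre_def f by (simp add: field_simps)
  then show ?thesis unfolding dyadic_def by blast
qed

lemma map_bit_at_take: "map (bit_at b) [0..<k] = take k b @ replicate (k - length b) False"
  by (rule nth_equalityI) (auto simp: bit_at_def nth_append min_def)

lemma trunc_centre_approx:
  assumes "dyadic r"
  shows "\<bar>trunc_centre r L - r\<bar> \<le> 1 / 2^(L+4)"
proof -
  let ?fb = "frac_part_bits r" and ?k = "L + 3"
  let ?T = "frac_val (take ?k ?fb)"
  have F': "frac_val (trunc_frac_bits r L) = ?T + 1 / 2^(L+4)"
  proof -
    have "frac_val (trunc_frac_bits r L) = frac_val (map (bit_at ?fb) [0..<?k]) + 1 / 2^(Suc ?k)"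
      unfolding trunc_frac_bits_def by simp
    also have "frac_val (map (bit_at ?fb) [0..<?k]) = ?T"
      unfolding map_bit_at_take frac_val_append by simp
    finally show ?thesis by simp
  qed
  have tk: "?T \<le> frac_val ?fb" "frac_val ?fb < ?T + 1 / 2^?k" using frac_val_take[of ?k ?fb] by auto
  have h: "(1::real) / 2^?k = 2 * (1 / 2^(L+4))" by (simp add: eval_nat_numeral)
  have diff: "\<bar>frac_val (trunc_frac_bits r L) - frac_val ?fb\<bar> \<le> 1 / 2^(L+4)" using F' tk h by linarith
  define A where "A = real (nat \<lfloor>\<bar>r\<bar>\<rfloor>)"
  have ra: "\<bar>r\<bar> = A + frac_val ?fb" unfolding A_def by (rule abs_dyadic_split[OF assms])
  have c: "trunc_centre r L = (if r < 0 then -1 else 1) * (A + frac_val (trunc_frac_bits r L))" unfolding trunc_centre_def A_def ..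
  define D where "D = frac_val (trunc_frac_bits r L) - frac_val ?fb"
  have "trunc_centre r L - r = (if r < 0 then -1 else 1) * D"
    using c ra unfolding D_def by (cases "r < 0"; simp add: abs_if; linarith)
  then have "\<bar>trunc_centre r L - r\<bar> = \<bar>D\<bar>" by (simp add: abs_mult)
  then show ?thesis using diff unfolding D_def by simp
qed

text \<open>
  Centre and radius of the interval selected by the machine; the junk value for
  \<open>[-\<infinity>, \<infinity>]\<close> never occurs (\<open>sel_ival\<close>).
\<close>

definition sel_centre :: "(bool list \<Rightarrow> bool list) \<Rightarrow> nat \<Rightarrow> real" where
  "sel_centre \<phi> L = (case ival_of \<phi> (first_narrow \<phi> L) of IFin r e \<Rightarrow> r | IWhole \<Rightarrow> 0)"

definition sel_radius :: "(bool list \<Rightarrow> bool list) \<Rightarrow> nat \<Rightarrow> real" where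
  "sel_radius \<phi> L = (case ival_of \<phi> (first_narrow \<phi> L) of IFin r e \<Rightarrow> e | IWhole \<Rightarrow> 0)"

lemma half_power: "(1/2::real)^n = 1/2^n" by (simp add: power_one_over)

lemma abs_plus_1_le_power: "\<bar>x\<bar> + 1 \<le> 2 ^ nat \<lceil>log 2 (\<bar>x\<bar> + 1)\<rceil>"
proof -
  let ?l = "log 2 (\<bar>x\<bar> + 1)"
  have l0: "0 \<le> ?l" by simp
  have "?l \<le> real (nat \<lceil>?l\<rceil>)" using l0 by linarith
  then have "(2::real) powr ?l \<le> 2 powr real (nat \<lceil>?l\<rceil>)" by (rule powr_mono) simp
  moreover have "(2::real) powr real (nat \<lceil>?l\<rceil>) = 2 ^ nat \<lceil>?l\<rceil>" by (rule powr_realpow) simp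
  moreover have "(2::real) powr ?l = \<bar>x\<bar> + 1" by simp
  ultimately show ?thesis by simp
qed

context interval_name
begin

lemma ex_narrow_code: "\<exists>m. narrow_code (\<phi> (nat_code m)) L"
proof -
  obtain N where "ival_diam_le (ival_of \<phi> N) (1 / 2^(L+4))" using Ri_name_diam_small[of "1/2^(L+4)"] by auto
  then have "narrow_code (\<phi> (nat_code N)) L"
    unfolding Ri_name_code by (rule narrow_code_if_diam_le[OF Ri_name_valid])
  then show ?thesis by blast
qed

lemma sel_ival: "ival_of \<phi> (first_narrow \<phi> L) = IFin (sel_centre \<phi> L) (sel_radius \<phi> L) \<and> sel_radius \<phi> L < 1/2^(L+3)"
proof -
  let ?m = "first_narrow \<phi> L"
  have ok: "narrow_code (\<phi> (nat_code ?m)) L" unfolding first_narrow_def by (rule LeastI_ex[OF ex_narrow_code])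
  show ?thesis
  proof (cases "ival_of \<phi> ?m")
    case (IFin r e)
    then have "e < 1/2^(L+3)" using ok Ri_name_code[of ?m] narrow_code_IFin Ri_name_valid[of ?m] by simp
    then show ?thesis using IFin by (simp add: sel_centre_def sel_radius_def)
  next
    case IWhole
    then show ?thesis using ok Ri_name_code[of ?m] not_narrow_code_IWhole by simp
  qed
qed

lemma id_machine_out: "1 \<le> length a \<Longrightarrow> otm_out \<phi> id_machine a = ival_code (IFin (trunc_centre (sel_centre \<phi> (length a)) (length a)) (1/2^(length a)))"
proof -
  assume L: "1 \<le> length a"
  let ?L = "length a"
  have "otm_out \<phi> id_machine a = out_word (\<phi> (nat_code (first_narrow \<phi> ?L))) ?L" by (rule id_machine_run(3)[OF ex_narrow_code])
  also have "\<phi> (nat_code (first_narrow \<phi> ?L)) = ival_code (IFin (sel_centre \<phi> ?L) (sel_radius \<phi> ?L))"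
    using Ri_name_code sel_ival by simp
  finally show ?thesis using out_word_eq[OF L] by simp
qed

lemma sel_trunc_centre_approx: "\<bar>trunc_centre (sel_centre \<phi> L) L - x\<bar> < 1/2^(L+2)"
proof -
  have v: "ival_valid (IFin (sel_centre \<phi> L) (sel_radius \<phi> L))" using Ri_name_valid sel_ival by metis
  have a1: "\<bar>trunc_centre (sel_centre \<phi> L) L - sel_centre \<phi> L\<bar> \<le> 1/2^(L+4)" using v by (intro trunc_centre_approx) (simp add: ival_valid_def)
  have "x \<in> ival_set (IFin (sel_centre \<phi> L) (sel_radius \<phi> L))" using Ri_name_mem sel_ival by metis
  then have i: "sel_centre \<phi> L - sel_radius \<phi> L \<le> x" "x \<le> sel_centre \<phi> L + sel_radius \<phi> L" by (auto simp: ival_set_def)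
  have ecb: "sel_radius \<phi> L < 1/2^(L+3)" using sel_ival by blast
  have a2: "\<bar>sel_centre \<phi> L - x\<bar> < 1/2^(L+3)" using i ecb by (simp add: abs_less_iff)
  define q where "q = (1::real)/2^(L+4)"
  have q: "0 < q" "1/2^(L+3) = 2*q" "1/2^(L+2) = 4*q" unfolding q_def by (simp_all add: eval_nat_numeral)
  show ?thesis using a1 a2 q unfolding q_def[symmetric] by linarith
qed

abbreviation "out_name \<equiv> otm_out \<phi> id_machine"

definition out_centre :: "nat \<Rightarrow> real" where "out_centre n = trunc_centre (sel_centre \<phi> (n+2)) (n+2)"

lemma out_name_code: "out_name (nat_code n) = ival_code (IFin (out_centre n) (1/2^(n+2)))"
  using id_machine_out[of "nat_code n"] by (simp add: length_nat_code out_centre_def)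

lemma out_name_valid: "ival_valid (IFin (out_centre n) (1/2^(n+2)))"
  unfolding ival_valid_def out_centre_def ival.case by (intro conjI dyadic_trunc_centre dyadic_inverse_power2) simp

lemma ival_of_out_name: "ival_of out_name n = IFin (out_centre n) (1/2^(n+2))"
  using ival_of_eq[where J="IFin (out_centre n) (1/2^(n+2))" and \<phi>=out_name and n=n] out_name_valid[of n] out_name_code[of n] by blast

lemma out_centre_approx: "\<bar>out_centre n - x\<bar> < 1/2^(n+4)"
proof -
  have e: "n+2+2 = n+(4::nat)" by simp
  show ?thesis using sel_trunc_centre_approx[of "n+2", unfolded e] unfolding out_centre_def .
qed

lemma Ri_name_out_name: "Ri_name out_name x"
proof (rule Ri_nameI[where C = 1])
  fix n
  have a0: "\<bar>out_centre n - x\<bar> < 1/2^(n+4)" and a1: "\<bar>out_centre (Suc n) - x\<bar> < 1/2^(Suc n+4)"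
    by (rule out_centre_approx)+
  define q where "q = (1::real)/2^(n+5)"
  have q: "0 < q" "1/2^(n+4) = 2*q" "1/2^(Suc n+2) = 4*q" "1/2^(n+2) = 8*q" "1/2^(Suc n+4) = q"
    "1/2^n = 32*q" unfolding q_def by (simp_all add: eval_nat_numeral)
  show "ival_set (IFin (out_centre (Suc n)) (1/2^(Suc n+2))) \<subseteq> ival_set (IFin (out_centre n) (1/2^(n+2)))"
    using a0 a1 q unfolding ival_set_def ival.case q by (auto simp: abs_less_iff)
  show "x \<in> ival_set (IFin (out_centre n) (1/2^(n+2)))"
    using a0 q unfolding ival_set_def ival.case q by (auto simp: abs_less_iff)
  show "ival_diam_le (IFin (out_centre n) (1/2^(n+2))) (1 / 2^n)"
    using q unfolding ival_diam_le_def ival.case q by simp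
qed (rule out_name_valid out_name_code)+

lemma first_narrow_le_mu: "first_narrow \<phi> L \<le> Ri_mu \<phi> (L+4)"
proof -
  let ?N0 = "LEAST N. ival_diam_le (ival_of \<phi> N) ((1/2)^(L+4))"
  have "ival_diam_le (ival_of \<phi> ?N0) ((1/2)^(L+4))" by (rule LeastI_ex[OF ex_diam_le])
  then have "narrow_code (\<phi> (nat_code ?N0)) L"
    unfolding Ri_name_code half_power by (rule narrow_code_if_diam_le[OF Ri_name_valid])
  then have "first_narrow \<phi> L \<le> ?N0" unfolding first_narrow_def by (rule Least_le)
  then show ?thesis unfolding Ri_mu_def by simp
qed

lemma length_int_bits_sel_centre: "length (int_bits (sel_centre \<phi> L)) \<le> Ri_mu \<phi> 0"
proof -
  let ?T = "nat \<lceil>log 2 (\<bar>x\<bar> + 1)\<rceil>"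
  let ?r = "sel_centre \<phi> L"
  have of: "ival_of \<phi> (first_narrow \<phi> L) = IFin ?r (sel_radius \<phi> L)" "sel_radius \<phi> L < 1/2^(L+3)" using sel_ival by auto
  have "x \<in> ival_set (IFin ?r (sel_radius \<phi> L))" using Ri_name_mem of(1) by metis
  then have i: "?r - sel_radius \<phi> L \<le> x" "x \<le> ?r + sel_radius \<phi> L" by (auto simp: ival_set_def)
  have o1: "(1::real)/2^(L+3) \<le> 1" by simp
  have ax: "x \<le> \<bar>x\<bar>" "- x \<le> \<bar>x\<bar>" by auto
  have "?r < \<bar>x\<bar> + 1" "- ?r < \<bar>x\<bar> + 1" using o1 ax i of(2) by linarith+
  then have "\<bar>?r\<bar> < \<bar>x\<bar> + 1" by (simp add: abs_less_iff)
  also have "\<dots> \<le> 2 ^ ?T" by (rule abs_plus_1_le_power)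
  finally have "real (nat \<lfloor>\<bar>?r\<bar>\<rfloor>) < 2 ^ ?T" by linarith
  then have "nat \<lfloor>\<bar>?r\<bar>\<rfloor> < 2 ^ ?T" by (metis of_nat_less_iff of_nat_numeral of_nat_power)
  then have "length (int_bits ?r) \<le> ?T" by (rule length_bin_le)
  also have "?T \<le> Ri_mu \<phi> 0" unfolding Ri_mu_def Ri_xi_eq by simp
  finally show ?thesis .
qed

lemma id_machine_time: "otm_time \<phi> id_machine a \<le> 2*length a+5 + (Ri_mu \<phi> (length a+4)+1)*(17*length a+110) + (33 * (Ri_mu \<phi> 0 + length a + 4) + 30)"
proof -
  let ?L = "length a"
  have t: "otm_time \<phi> id_machine a \<le> 2*?L+5 + (first_narrow \<phi> ?L+1)*(17*?L+110) + (33 * out_blocks (\<phi> (nat_code (first_narrow \<phi> ?L))) ?L + 30)"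
    by (rule id_machine_run(2)[OF ex_narrow_code])
  have "\<phi> (nat_code (first_narrow \<phi> ?L)) = ival_code (IFin (sel_centre \<phi> ?L) (sel_radius \<phi> ?L))"
    using Ri_name_code sel_ival by simp
  then have "out_blocks (\<phi> (nat_code (first_narrow \<phi> ?L))) ?L = max (length (int_bits (sel_centre \<phi> ?L))) (?L+4)" by (simp add: out_blocks_IFin)
  also have "\<dots> \<le> Ri_mu \<phi> 0 + ?L + 4" using length_int_bits_sel_centre[of ?L] by simp
  finally have m: "out_blocks (\<phi> (nat_code (first_narrow \<phi> ?L))) ?L \<le> Ri_mu \<phi> 0 + ?L + 4" .
  have X: "(first_narrow \<phi> ?L+1)*(17*?L+110) \<le> (Ri_mu \<phi> (?L+4)+1)*(17*?L+110)"
    using first_narrow_le_mu[of ?L] by (intro mult_le_mono1) simp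
  have "2*?L+5 + (first_narrow \<phi> ?L+1)*(17*?L+110) + (33 * out_blocks (\<phi> (nat_code (first_narrow \<phi> ?L))) ?L + 30)
     \<le> 2*?L+5 + (Ri_mu \<phi> (?L+4)+1)*(17*?L+110) + (33 * (Ri_mu \<phi> 0 + ?L + 4) + 30)"
    using X m by (intro add_mono order_refl) simp_all
  then show ?thesis using t by (rule order_trans[rotated])
qed

lemma Ri_mu_out_name: "Ri_mu out_name n \<le> n + Ri_mu \<phi> 0"
proof -
  have "ival_diam_le (ival_of out_name n) ((1/2)^n)"
  proof -
    have "(2::real) * (1/2^(n+2)) \<le> 1/2^n" by (simp add: eval_nat_numeral field_simps)
    then show ?thesis by (simp add: ival_of_out_name ival_diam_le_def half_power)
  qed
  then have "(LEAST N. ival_diam_le (ival_of out_name N) ((1/2)^n)) \<le> n" by (rule Least_le)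
  moreover have "Ri_xi out_name = x" by (rule Ri_xi_eqI[OF Ri_name_out_name])
  ultimately show ?thesis unfolding Ri_mu_def Ri_xi_eq by simp
qed

end

section \<open>Polynomial time\<close>

definition time_bound :: "(nat \<Rightarrow> nat) \<Rightarrow> nat \<Rightarrow> nat" where
  "time_bound l n = 2*n+5 + (l (n+4)+1)*(17*n+110) + (33 * (l 0 + n + 4) + 30)"

definition param_bound :: "(nat \<Rightarrow> nat) \<Rightarrow> nat \<Rightarrow> nat" where
  "param_bound l n = n + l 0"

lemma sopoly_const: "(\<lambda>l n. c) \<in> sopoly"
proof -
  have "(\<lambda>l n. poly [:c:] n) \<in> sopoly" by (rule sop_poly)
  then show ?thesis by simp
qed

lemma sopoly_arg: "(\<lambda>l n. n) \<in> sopoly"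
proof -
  have "(\<lambda>l n. poly [:0, 1:] n) \<in> sopoly" by (rule sop_poly)
  then show ?thesis by simp
qed

lemma time_bound_sopoly: "time_bound \<in> sopoly"
  unfolding time_bound_def by (intro sop_add sop_mult sop_app sopoly_const sopoly_arg)

lemma param_bound_sopoly: "param_bound \<in> sopoly"
  unfolding param_bound_def by (intro sop_add sop_app sopoly_const sopoly_arg)

lemma id_machine_spec:
  assumes "\<phi> \<in> Ri_dom"
  shows "otm_total \<phi> id_machine \<and> otm_out \<phi> id_machine \<in> Ri_dom \<and>
    Ri_xi (otm_out \<phi> id_machine) = id (Ri_xi \<phi>) \<and>
    (\<forall>a. otm_time \<phi> id_machine a \<le> time_bound (Ri_mu \<phi>) (length a)) \<and>
    (\<forall>n. Ri_mu (otm_out \<phi> id_machine) n \<le> param_bound (Ri_mu \<phi>) n)"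
proof -
  obtain x where "interval_name \<phi> x" using Ri_dom_interval_name[OF assms] ..
  then interpret interval_name \<phi> x .
  show ?thesis
  proof (intro conjI allI)
    show "otm_total \<phi> id_machine"
      unfolding otm_total_def using id_machine_run(1)[OF ex_narrow_code] by blast
    show "otm_out \<phi> id_machine \<in> Ri_dom" using Ri_name_out_name unfolding Ri_dom_def by blast
    show "Ri_xi (otm_out \<phi> id_machine) = id (Ri_xi \<phi>)" using Ri_xi_eqI[OF Ri_name_out_name] Ri_xi_eq by simp
  next
    fix a
    show "otm_time \<phi> id_machine a \<le> time_bound (Ri_mu \<phi>) (length a)"
      using id_machine_time[of a] by (simp add: time_bound_def)
  next
    fix n
    show "Ri_mu (otm_out \<phi> id_machine) n \<le> param_bound (Ri_mu \<phi>) n"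
      using Ri_mu_out_name[of n] by (simp add: param_bound_def)
  qed
qed

lemma poly_time_id: "poly_time_computable Ri_dom Ri_xi Ri_mu Ri_dom Ri_xi Ri_mu id"
  unfolding poly_time_computable_def
  by (intro exI[of _ id_machine] exI[of _ time_bound] exI[of _ param_bound]
      conjI[OF otm_wf_id_machine] conjI[OF time_bound_sopoly] conjI[OF param_bound_sopoly] ballI)
    (rule id_machine_spec)

theorem mainTheorem3:
  shows "(\<forall>\<phi>\<in>Ri_dom. \<forall>n. \<exists>N. ival_diam_le (ival_of \<phi> N) ((1/2) ^ n))
         \<and> parametrised_space Ri_dom Ri_xi Ri_mu"
proof -
  have "\<exists>N. ival_diam_le (ival_of \<phi> N) ((1/2) ^ n)" if dom: "\<phi> \<in> Ri_dom" for \<phi> n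
  proof -
    obtain x where "interval_name \<phi> x" using Ri_dom_interval_name[OF dom] ..
    then show ?thesis by (rule interval_name.ex_diam_le)
  qed
  then show ?thesis unfolding parametrised_space_def using preparametrised_Ri poly_time_id by simp
qed

end
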